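(* Let $A\in\mathbb{C}^{M\times N}$ be a deterministic matrix with $m$th row $a_m^H$. Let $x\sim\mathcal{CN}(0_{N\times1},\sigma_x^2I_N)$ (i.i.d. circularly-symmetric complex Gaussian), $e^z\sim\mathcal{CN}(0_{M\times1},C_{e^z})$ circularly-symmetric complex Gaussian, and $e^y\sim\mathcal{N}(\bar e^y,C_{e^y})$ a real Gaussian vector, with $x,e^z,e^y$ independent. Let $y=|Ax+e^z|^2+e^y\in\mathbb{R}^M$ (entrywise squared modulus) and use the identity preprocessing $\mathcal{T}(y)=y$. Define $$C_z=\sigma_x^2AA^H+C_{e^z},\quad \bar y=\mathrm{diag}(C_z)+\bar e^y,\quad T=C_z\odot C_z^*+C_{e^y},$$ assume $T$ is invertible, let $t\in\mathbb{R}^M$ solve $Tt=y-\bar y$, and let $V_m=\sigma_x^4a_ma_m^H$ for $m=1,\dots,M$. Then the matrix of the form $W_0+\sum_{m=1}^My_mW_m$ ($W_m\in\mathbb{C}^{N\times N}$) minimizing $\mathbb{E}[\|W_0+\sum_{m}y_mW_m-xx^H\|_F^2]$ is $$D_y^{\mathbb{C}}=\sigma_x^2I_N+\sum_{m=1}^Mt_mV_m,$$ and its spectral MSE is $$\mathbb{E}\big[\|D^{\mathbb{C}}_y-xx^H\|_F^2\big]=\mathbb{E}\big[\|xx^H-\sigma_x^2I_N\|_F^2\big]-\sum_{m=1}^M\sum_{m'=1}^M[T^{-1}]_{m,m'}\mathrm{tr}\big(V_m^HV_{m'}\big).$$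
   Context: $\odot$ is the entrywise (Hadamard) product, $C_z^*$ the entrywise complex conjugate, $\mathrm{diag}(C)$ the vector of diagonal entries of $C$. Expectations are over $x,e^z,e^y$. The linear spectral estimate of $x$ is a scaled leading eigenvector of $D_y^{\mathbb{C}}$, i.e., a minimizer of $\|D_y^{\mathbb{C}}-\tilde x\tilde x^H\|_F$ over $\tilde x\in\mathbb{C}^N$. *)

theory Defs
  imports "HOL-Probability.Probability"
begin

definition cadj :: "complex^'c^'r \<Rightarrow> complex^'r^'c" where
  "cadj A = (\<chi> i j. cnj (A $ j $ i))"

definition frob_norm :: "complex^'c^'r \<Rightarrow> real" where
  "frob_norm B = sqrt (\<Sum>i\<in>UNIV. \<Sum>j\<in>UNIV. (cmod (B $ i $ j))\<^sup>2)"

definition couter :: "complex^'n \<Rightarrow> complex^'n \<Rightarrow> complex^'n^'n" where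
  "couter u v = (\<chi> i j. u $ i * cnj (v $ j))"

definition gauss_measure :: "real \<Rightarrow> real \<Rightarrow> real measure" where
  "gauss_measure mu v =
     (if v = 0 then return borel mu else density lborel (normal_density mu (sqrt v)))"

definition real_gaussian_vec ::
  "'w measure \<Rightarrow> ('w \<Rightarrow> real^'m) \<Rightarrow> real^'m \<Rightarrow> real^'m^'m \<Rightarrow> bool" where
  "real_gaussian_vec M e mu C \<longleftrightarrow>
     e \<in> borel_measurable M \<and> (\<forall>i j. C $ i $ j = C $ j $ i) \<and>
     (\<forall>w. 0 \<le> w \<bullet> (C *v w) \<and>
          distr M borel (\<lambda>\<omega>. w \<bullet> e \<omega>) = gauss_measure (w \<bullet> mu) (w \<bullet> (C *v w)))"

text \<open>Circularly-symmetric complex Gaussian vector CN(0, C): C Hermitian, and every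
  real-linear functional Re(w^H z) is real Gaussian with mean 0 and variance (w^H C w)/2.\<close>
definition cscg_vec ::
  "'w measure \<Rightarrow> ('w \<Rightarrow> complex^'n) \<Rightarrow> complex^'n^'n \<Rightarrow> bool" where
  "cscg_vec M z C \<longleftrightarrow>
     z \<in> borel_measurable M \<and> (\<forall>i j. C $ i $ j = cnj (C $ j $ i)) \<and>
     (\<forall>w. let v = Re (\<Sum>i\<in>UNIV. \<Sum>j\<in>UNIV. cnj (w $ i) * C $ i $ j * w $ j) / 2 in
          0 \<le> v \<and>
          distr M borel (\<lambda>\<omega>. Re (\<Sum>i\<in>UNIV. cnj (w $ i) * z \<omega> $ i)) = gauss_measure 0 v)"

text \<open>Mutual independence of three random variables (of possibly different types):
  independence of the sigma-algebras they generate.\<close>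
definition indep3 ::
  "'w measure \<Rightarrow> ('w \<Rightarrow> 'a::topological_space) \<Rightarrow> ('w \<Rightarrow> 'b::topological_space)
     \<Rightarrow> ('w \<Rightarrow> 'c::topological_space) \<Rightarrow> bool" where
  "indep3 M X Y Z \<longleftrightarrow>
     prob_space.indep_sets M
       (\<lambda>i::nat. if i = 0 then sets (vimage_algebra (space M) X borel)
                 else if i = 1 then sets (vimage_algebra (space M) Y borel)
                 else sets (vimage_algebra (space M) Z borel)) {0, 1, 2}"


definition Cz_of :: "real \<Rightarrow> complex^'n^'m \<Rightarrow> complex^'m^'m \<Rightarrow> complex^'m^'m" where
  "Cz_of \<sigma>x A Cez = \<sigma>x\<^sup>2 *\<^sub>R (A ** cadj A) + Cez"

definition ybar_of :: "complex^'m^'m \<Rightarrow> real^'m \<Rightarrow> real^'m" where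
  "ybar_of Cz eybar = (\<chi> m. Re (Cz $ m $ m) + eybar $ m)"

text \<open>T = C_z (Hadamard) conj(C_z) + C_{e^y}; entries |C_z(i,j)|^2 + C_{e^y}(i,j).\<close>
definition T_of :: "complex^'m^'m \<Rightarrow> real^'m^'m \<Rightarrow> real^'m^'m" where
  "T_of Cz Cey = (\<chi> i j. (cmod (Cz $ i $ j))\<^sup>2 + Cey $ i $ j)"

text \<open>a_m, where a_m^H is the m-th row of A.\<close>
definition arow :: "complex^'n^'m \<Rightarrow> 'm \<Rightarrow> complex^'n" where
  "arow A m = (\<chi> k. cnj (A $ m $ k))"

definition V_of :: "real \<Rightarrow> complex^'n^'m \<Rightarrow> 'm \<Rightarrow> complex^'n^'n" where
  "V_of \<sigma>x A m = (\<sigma>x ^ 4) *\<^sub>R couter (arow A m) (arow A m)"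

end

(*
  Write z = A x + e^z and Y = y - ybar. The real linear functionals of (x, z) are sums of
  independent centred Gaussians, hence centred Gaussian; this gives E[L^4] = 3 (E[L^2])^2, and
  polarization turns it into Isserlis' theorem for the fourth moments of the coordinates of (x, z).
  These moments show E[Y_k Y_l] = |C_z(k,l)|^2 + C_{e^y}(k,l) = T(k,l) and E[Y_k x x^H] = V_k,
  while E[x x^H] = sigma_x^2 I. Consequently D is the linear MMSE estimator of x x^H from Y:
  its error is orthogonal to 1 and to every Y_l, so by Pythagoras the mean squared error of any
  estimator W_0 + sum_m y_m W_m exceeds that of D by E ||W_0 + sum_m y_m W_m - D||_F^2. The
  constant estimator sigma_x^2 I then yields the formula for the MSE.
*)

theory Submission
  imports Defs
begin

section \<open>Scalar Gaussian laws\<close>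

lemma gauss_measure_central_moments:
  assumes "0 \<le> v"
  shows "integrable (gauss_measure mu v) (\<lambda>t. (t - mu) ^ k)"
    and "(\<integral>t. t - mu \<partial>gauss_measure mu v) = 0"
    and "(\<integral>t. (t - mu)\<^sup>2 \<partial>gauss_measure mu v) = v"
    and "(\<integral>t. (t - mu) ^ 4 \<partial>gauss_measure mu v) = 3 * v\<^sup>2"
proof -
  have "integrable (gauss_measure mu v) (\<lambda>t. (t - mu) ^ k) \<and>
    (\<integral>t. t - mu \<partial>gauss_measure mu v) = 0 \<and>
    (\<integral>t. (t - mu)\<^sup>2 \<partial>gauss_measure mu v) = v \<and>
    (\<integral>t. (t - mu) ^ 4 \<partial>gauss_measure mu v) = 3 * v\<^sup>2"
  proof (cases "v = 0")
    case True
    interpret prob_space "return borel mu" by (rule prob_space_return) simp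
    have "integrable (return borel mu) (\<lambda>t. (t - mu) ^ k)"
      by (rule integrable_cong_AE_imp[OF integrable_const[of "(mu - mu) ^ k"]])
         (auto simp: AE_return)
    then show ?thesis
      using True by (simp add: gauss_measure_def integral_return)
  next
    case False
    then have s: "0 < sqrt v" using assms by simp
    have density: "gauss_measure mu v = density lborel (normal_density mu (sqrt v))"
      using False by (simp add: gauss_measure_def)
    have moment: "\<And>n. (\<integral>t. (t - mu) ^ n \<partial>gauss_measure mu v)
        = (\<integral>t. normal_density mu (sqrt v) t * (t - mu) ^ n \<partial>lborel)"
      unfolding density by (subst integral_density) auto
    have "integrable (gauss_measure mu v) (\<lambda>t. (t - mu) ^ k)"
      unfolding density by (subst integrable_density) (auto intro: integrable_normal_moment[OF s])
    moreover have "(\<integral>t. t - mu \<partial>gauss_measure mu v) = 0"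
      using moment[of 1] integral_normal_moment_odd[OF s, of mu 0] by simp
    moreover have "(\<integral>t. (t - mu)\<^sup>2 \<partial>gauss_measure mu v) = v"
      using moment[of 2] integral_normal_moment_even[OF s, of mu 1] assms by simp
    moreover have "(\<integral>t. (t - mu) ^ 4 \<partial>gauss_measure mu v) = 3 * v\<^sup>2"
      using moment[of 4] integral_normal_moment_even[OF s, of mu 2] assms
      by (simp add: fact_numeral eval_nat_numeral power2_eq_square)
    ultimately show ?thesis by blast
  qed
  then show "integrable (gauss_measure mu v) (\<lambda>t. (t - mu) ^ k)"
    and "(\<integral>t. t - mu \<partial>gauss_measure mu v) = 0"
    and "(\<integral>t. (t - mu)\<^sup>2 \<partial>gauss_measure mu v) = v"
    and "(\<integral>t. (t - mu) ^ 4 \<partial>gauss_measure mu v) = 3 * v\<^sup>2"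
    by blast+
qed

lemma distr_gauss_central_moments:
  assumes X: "X \<in> borel_measurable M" and law: "distr M borel X = gauss_measure mu v"
    and "0 \<le> v"
  shows "integrable M (\<lambda>w. (X w - mu) ^ k)"
    and "(\<integral>w. X w - mu \<partial>M) = 0"
    and "(\<integral>w. (X w - mu)\<^sup>2 \<partial>M) = v"
    and "(\<integral>w. (X w - mu) ^ 4 \<partial>M) = 3 * v\<^sup>2"
proof -
  have integrable_iff: "\<And>f :: real \<Rightarrow> real. f \<in> borel_measurable borel \<Longrightarrow>
      integrable M (\<lambda>w. f (X w)) \<longleftrightarrow> integrable (gauss_measure mu v) f"
    by (subst law[symmetric], subst integrable_distr_eq) (use X in auto)
  have integral_eq: "\<And>f :: real \<Rightarrow> real. f \<in> borel_measurable borel \<Longrightarrow>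
      (\<integral>w. f (X w) \<partial>M) = integral\<^sup>L (gauss_measure mu v) f"
    by (subst law[symmetric], subst integral_distr) (use X in auto)
  note moments = gauss_measure_central_moments[OF \<open>0 \<le> v\<close>, of mu]
  show "integrable M (\<lambda>w. (X w - mu) ^ k)"
    using integrable_iff[of "\<lambda>t. (t - mu) ^ k"] moments by simp
  show "(\<integral>w. X w - mu \<partial>M) = 0"
    using integral_eq[of "\<lambda>t. t - mu"] moments by simp
  show "(\<integral>w. (X w - mu)\<^sup>2 \<partial>M) = v"
    using integral_eq[of "\<lambda>t. (t - mu)\<^sup>2"] moments by simp
  show "(\<integral>w. (X w - mu) ^ 4 \<partial>M) = 3 * v\<^sup>2"
    using integral_eq[of "\<lambda>t. (t - mu) ^ 4"] moments by simp
qed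

lemma AE_eq_if_distr_gauss_measure_zero:
  assumes "X \<in> borel_measurable M" and "distr M borel X = gauss_measure mu 0"
  shows "AE w in M. X w = mu"
proof -
  have "AE t in distr M borel X. t = mu"
    unfolding assms(2) gauss_measure_def by (simp add: AE_return)
  then show ?thesis
    using assms(1) by (subst (asm) AE_distr_iff) auto
qed

lemma distributed_normal_iff_distr_gauss_measure:
  assumes "X \<in> borel_measurable M" and "0 < v"
  shows "distributed M lborel X (normal_density mu (sqrt v)) \<longleftrightarrow> distr M borel X = gauss_measure mu v"
proof -
  have "distr M lborel X = distr M borel X" by (rule distr_cong) auto
  then show ?thesis
    using assms by (auto simp: distributed_def gauss_measure_def)
qed

lemma (in prob_space) distr_add_indep_gauss_measure:
  assumes X: "X \<in> borel_measurable M" and Y: "Y \<in> borel_measurable M"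
    and indep: "indep_var borel X borel Y"
    and law_X: "distr M borel X = gauss_measure 0 v1" and law_Y: "distr M borel Y = gauss_measure 0 v2"
    and "0 \<le> v1" "0 \<le> v2"
  shows "distr M borel (\<lambda>w. X w + Y w) = gauss_measure 0 (v1 + v2)"
proof -
  consider "v1 = 0" | "v2 = 0" | "0 < v1" "0 < v2" using \<open>0 \<le> v1\<close> \<open>0 \<le> v2\<close> by linarith
  then show ?thesis
  proof cases
    case 1
    then have "AE w in M. X w = 0" using AE_eq_if_distr_gauss_measure_zero[OF X] law_X by simp
    then have "distr M borel (\<lambda>w. X w + Y w) = distr M borel Y"
      by (intro distr_cong_AE) (use X Y in auto)
    then show ?thesis using law_Y 1 by simp
  next
    case 2
    then have "AE w in M. Y w = 0" using AE_eq_if_distr_gauss_measure_zero[OF Y] law_Y by simp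
    then have "distr M borel (\<lambda>w. X w + Y w) = distr M borel X"
      by (intro distr_cong_AE) (use X Y in auto)
    then show ?thesis using law_X 2 by simp
  next
    case 3
    have "distributed M lborel (\<lambda>w. X w + Y w)
        (normal_density (0 + 0) (sqrt ((sqrt v1)\<^sup>2 + (sqrt v2)\<^sup>2)))"
      using 3 law_X law_Y
      by (intro add_indep_normal[OF indep])
         (auto simp: distributed_normal_iff_distr_gauss_measure[OF X] distributed_normal_iff_distr_gauss_measure[OF Y])
    then show ?thesis
      using 3 X Y by (subst (asm) distributed_normal_iff_distr_gauss_measure) auto
  qed
qed

section \<open>Isserlis' theorem by polarization\<close>

lemma abs_mult_le_sum_squares: "\<bar>a * b\<bar> \<le> a\<^sup>2 + (b :: real)\<^sup>2"
proof -
  have "2 * (\<bar>a\<bar> * \<bar>b\<bar>) \<le> a\<^sup>2 + b\<^sup>2" "0 \<le> \<bar>a\<bar> * \<bar>b\<bar>"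
    using sum_squares_bound[of "\<bar>a\<bar>" "\<bar>b\<bar>"] by (simp_all add: mult.assoc)
  then show ?thesis unfolding abs_mult by linarith
qed

lemma abs_mult4_le_sum_power4: "\<bar>a * b * c * d\<bar> \<le> a ^ 4 + b ^ 4 + c ^ 4 + (d :: real) ^ 4"
proof -
  have "\<bar>a * b * c * d\<bar> \<le> (a * b)\<^sup>2 + (c * d)\<^sup>2"
    using abs_mult_le_sum_squares[of "a * b" "c * d"] by (simp add: mult.assoc)
  also have "\<dots> \<le> (a ^ 4 + b ^ 4) + (c ^ 4 + d ^ 4)"
    using abs_mult_le_sum_squares[of "a\<^sup>2" "b\<^sup>2"] abs_mult_le_sum_squares[of "c\<^sup>2" "d\<^sup>2"]
    by (intro add_mono) (simp_all add: power_mult_distrib flip: power_mult)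
  finally show ?thesis by simp
qed

lemma mult4_polarization: "a * b * c * d = (1/24) *
   ((a + b + c + d) ^ 4 - (a + b + c) ^ 4 - (a + b + d) ^ 4 - (a + c + d) ^ 4 - (b + c + d) ^ 4
   + (a + b) ^ 4 + (a + c) ^ 4 + (a + d) ^ 4 + (b + c) ^ 4 + (b + d) ^ 4 + (c + d) ^ 4
   - a ^ 4 - b ^ 4 - c ^ 4 - (d :: real) ^ 4)"
  by (simp add: power4_eq_xxxx algebra_simps)

lemma Complex_eq_of_real_plus_i: "Complex a b = complex_of_real a + \<i> * complex_of_real b"
  by (simp add: complex_eq_iff)

lemma integrable_Complex:
  fixes f g :: "'a \<Rightarrow> real"
  assumes "integrable M f" "integrable M g"
  shows "integrable M (\<lambda>w. Complex (f w) (g w))"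
  using assms by (simp add: Complex_eq_of_real_plus_i)

lemma integral_Complex:
  fixes f g :: "'a \<Rightarrow> real"
  assumes "integrable M f" "integrable M g"
  shows "(\<integral>w. Complex (f w) (g w) \<partial>M) = Complex (integral\<^sup>L M f) (integral\<^sup>L M g)"
  using assms by (simp add: Complex_eq_of_real_plus_i)

locale gaussian_moment_family = prob_space M for M :: "'w measure" +
  fixes L :: "'v :: plus \<Rightarrow> 'w \<Rightarrow> real" and B :: "'v \<Rightarrow> 'v \<Rightarrow> real"
  assumes borel_measurable_L [measurable]: "L a \<in> borel_measurable M"
    and L_add: "L (a + b) w = L a w + L b w"
    and B_add_left: "B (a + b) c = B a c + B b c"
    and B_sym: "B a b = B b a"
    and integrable_L_power4: "integrable M (\<lambda>w. L a w ^ 4)"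
    and expectation_L_square: "expectation (\<lambda>w. (L a w)\<^sup>2) = B a a"
    and expectation_L_power4: "expectation (\<lambda>w. L a w ^ 4) = 3 * (B a a)\<^sup>2"
begin

lemma B_add_right: "B a (b + c) = B a b + B a c"
  using B_add_left B_sym by metis

lemma integrable_L_square: "integrable M (\<lambda>w. (L a w)\<^sup>2)"
  by (rule square_integrable_imp_integrable) (simp_all add: integrable_L_power4 flip: power_mult)

lemma integrable_L_mult: "integrable M (\<lambda>w. L a w * L b w)"
  by (rule Bochner_Integration.integrable_bound[OF Bochner_Integration.integrable_add[OF
        integrable_L_square[of a] integrable_L_square[of b]]])
     (auto intro!: AE_I2 order.trans[OF abs_mult_le_sum_squares])

lemma expectation_L_mult: "expectation (\<lambda>w. L a w * L b w) = B a b"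
proof -
  have "B (a + b) (a + b) = expectation (\<lambda>w. (L a w)\<^sup>2 + (L b w)\<^sup>2 + 2 * (L a w * L b w))"
    unfolding expectation_L_square[symmetric] by (simp add: L_add power2_eq_square algebra_simps)
  also have "\<dots> = B a a + B b b + 2 * expectation (\<lambda>w. L a w * L b w)"
    using integrable_L_square integrable_L_mult expectation_L_square by simp
  finally show ?thesis
    using B_add_left B_add_right B_sym[of a b] by simp
qed

lemma integrable_L_mult4: "integrable M (\<lambda>w. L a w * L b w * L c w * L d w)"
  by (rule Bochner_Integration.integrable_bound[of _ "\<lambda>w. L a w ^ 4 + L b w ^ 4 + L c w ^ 4 + L d w ^ 4"])
     (auto simp: integrable_L_power4 intro!: AE_I2 order.trans[OF abs_mult4_le_sum_power4])

text \<open>By polarization, a mixed fourth moment is a combination of fourth moments of sums,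
  which the hypotheses express through \<open>B\<close>.\<close>

lemma expectation_L_mult4:
  "expectation (\<lambda>w. L a w * L b w * L c w * L d w) = B a b * B c d + B a c * B b d + B a d * B b c"
proof -
  let ?P = "\<lambda>e w. L e w ^ 4"
  have polarization: "L a w * L b w * L c w * L d w = (1/24) *
    (?P (a+b+c+d) w - ?P (a+b+c) w - ?P (a+b+d) w - ?P (a+c+d) w - ?P (b+c+d) w
     + ?P (a+b) w + ?P (a+c) w + ?P (a+d) w + ?P (b+c) w + ?P (b+d) w + ?P (c+d) w
     - ?P a w - ?P b w - ?P c w - ?P d w)" for w
    unfolding L_add by (rule mult4_polarization)
  have "expectation (\<lambda>w. L a w * L b w * L c w * L d w) = (1/24) *
    (3 * (B (a+b+c+d) (a+b+c+d))\<^sup>2 - 3 * (B (a+b+c) (a+b+c))\<^sup>2 - 3 * (B (a+b+d) (a+b+d))\<^sup>2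
     - 3 * (B (a+c+d) (a+c+d))\<^sup>2 - 3 * (B (b+c+d) (b+c+d))\<^sup>2
     + 3 * (B (a+b) (a+b))\<^sup>2 + 3 * (B (a+c) (a+c))\<^sup>2 + 3 * (B (a+d) (a+d))\<^sup>2
     + 3 * (B (b+c) (b+c))\<^sup>2 + 3 * (B (b+d) (b+d))\<^sup>2 + 3 * (B (c+d) (c+d))\<^sup>2
     - 3 * (B a a)\<^sup>2 - 3 * (B b b)\<^sup>2 - 3 * (B c c)\<^sup>2 - 3 * (B d d)\<^sup>2)"
    by (simp only: polarization)
       (simp add: integrable_L_power4 expectation_L_power4 Bochner_Integration.integrable_diff
        Bochner_Integration.integrable_add)
  also have "\<dots> = B a b * B c d + B a c * B b d + B a d * B b c"
    unfolding B_add_left B_add_right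
    by (simp add: B_sym[of b a] B_sym[of c a] B_sym[of d a] B_sym[of c b] B_sym[of d b] B_sym[of d c]
        power2_eq_square algebra_simps)
  finally show ?thesis .
qed

text \<open>Complex coordinates \<open>u p = L (\<alpha> p) + i L (\<beta> p)\<close> whose real and imaginary parts have the
  covariances of a circularly-symmetric complex Gaussian vector with covariance \<open>K\<close>.\<close>

context
  fixes \<alpha> \<beta> :: "'i \<Rightarrow> 'v" and K :: "'i \<Rightarrow> 'i \<Rightarrow> complex" and u :: "'i \<Rightarrow> 'w \<Rightarrow> complex"
  assumes B_re_re: "B (\<alpha> p) (\<alpha> q) = Re (K p q) / 2"
    and B_im_im: "B (\<beta> p) (\<beta> q) = Re (K p q) / 2"
    and B_re_im: "B (\<alpha> p) (\<beta> q) = - Im (K p q) / 2"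
    and K_hermitian: "K q p = cnj (K p q)"
    and u_eq: "u p w = Complex (L (\<alpha> p) w) (L (\<beta> p) w)"
begin

lemma B_im_re: "B (\<beta> p) (\<alpha> q) = Im (K p q) / 2"
  using B_re_im[of q p] K_hermitian[of p q] B_sym by simp

lemma u_mult_cnj_eq: "u a w * cnj (u b w) =
    Complex (L (\<alpha> a) w * L (\<alpha> b) w + L (\<beta> a) w * L (\<beta> b) w)
            (L (\<beta> a) w * L (\<alpha> b) w - L (\<alpha> a) w * L (\<beta> b) w)"
  by (simp add: u_eq complex_eq_iff)

lemma integrable_u_mult_cnj: "integrable M (\<lambda>w. u a w * cnj (u b w))"
  unfolding u_mult_cnj_eq by (intro integrable_Complex) (simp_all add: integrable_L_mult)

lemma expectation_u_mult_cnj: "expectation (\<lambda>w. u a w * cnj (u b w)) = K a b"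
  unfolding u_mult_cnj_eq
  by (subst integral_Complex)
     (simp_all add: integrable_L_mult expectation_L_mult B_re_re B_im_im B_re_im B_im_re complex_eq_iff)

lemma u_mult_cnj4_eq: "u a w * cnj (u b w) * u c w * cnj (u d w) =
    (let a1 = L (\<alpha> a) w; a2 = L (\<beta> a) w; b1 = L (\<alpha> b) w; b2 = L (\<beta> b) w;
         c1 = L (\<alpha> c) w; c2 = L (\<beta> c) w; d1 = L (\<alpha> d) w; d2 = L (\<beta> d) w in
     Complex (a1 * b1 * c1 * d1 + a1 * b1 * c2 * d2 + a2 * b2 * c1 * d1 + a2 * b2 * c2 * d2
              - a2 * b1 * c2 * d1 + a2 * b1 * c1 * d2 + a1 * b2 * c2 * d1 - a1 * b2 * c1 * d2)
             (a1 * b1 * c2 * d1 - a1 * b1 * c1 * d2 + a2 * b2 * c2 * d1 - a2 * b2 * c1 * d2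
              + a2 * b1 * c1 * d1 + a2 * b1 * c2 * d2 - a1 * b2 * c1 * d1 - a1 * b2 * c2 * d2))"
  by (simp add: u_eq Let_def complex_eq_iff algebra_simps)

lemma integrable_u_mult_cnj4: "integrable M (\<lambda>w. u a w * cnj (u b w) * u c w * cnj (u d w))"
  unfolding u_mult_cnj4_eq Let_def by (intro integrable_Complex) (simp_all add: integrable_L_mult4)

lemma expectation_u_mult_cnj4:
  "expectation (\<lambda>w. u a w * cnj (u b w) * u c w * cnj (u d w)) = K a b * K c d + K a d * K c b"
proof -
  have "expectation (\<lambda>w. u a w * cnj (u b w) * u c w * cnj (u d w)) =
    Complex (Re (K a b) * Re (K c d) - Im (K a b) * Im (K c d) + Re (K a d) * Re (K b c) + Im (K a d) * Im (K b c))
            (Re (K a b) * Im (K c d) + Im (K a b) * Re (K c d) - Re (K a d) * Im (K b c) + Im (K a d) * Re (K b c))"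
    unfolding u_mult_cnj4_eq Let_def
    by (subst integral_Complex)
       (simp_all add: integrable_L_mult4 expectation_L_mult4 B_re_re B_im_im B_re_im B_im_re)
  also have "\<dots> = K a b * K c d + K a d * K c b"
    using K_hermitian[of b c] by (simp add: complex_eq_iff)
  finally show ?thesis .
qed

end

end

lemma borel_measurable_cnj [measurable (raw)]:
  "f \<in> borel_measurable M \<Longrightarrow> (\<lambda>w. cnj (f w)) \<in> borel_measurable M"
  by (rule borel_measurable_continuous_on[OF continuous_on_cnj[OF continuous_on_id]])

lemma borel_measurable_vec_nth [measurable (raw)]:
  "f \<in> borel_measurable M \<Longrightarrow> (\<lambda>w. f w $ i) \<in> borel_measurable M"
  by (rule borel_measurable_continuous_on[OF continuous_on_component[OF continuous_on_id]])

lemma borel_measurable_matrix_vector_mult: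
  fixes A :: "'a :: real_normed_algebra_1 ^ 'n ^ 'm"
  shows "f \<in> borel_measurable M \<Longrightarrow> (\<lambda>w. A *v f w) \<in> borel_measurable M"
proof -
  have "continuous_on UNIV (\<lambda>v :: 'a ^ 'n. A *v v)"
    unfolding matrix_vector_mult_def
    by (intro continuous_on_vec_lambda continuous_on_sum continuous_on_mult continuous_on_const
        continuous_on_component continuous_on_id)
  then show "f \<in> borel_measurable M \<Longrightarrow> (\<lambda>w. A *v f w) \<in> borel_measurable M"
    by (rule borel_measurable_continuous_on)
qed

definition square_integrable :: "'w measure \<Rightarrow> ('w \<Rightarrow> complex) \<Rightarrow> bool" where
  "square_integrable M f \<longleftrightarrow> f \<in> borel_measurable M \<and> integrable M (\<lambda>w. (cmod (f w))\<^sup>2)"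

lemma square_integrable_integrable_norm_square:
  "square_integrable M f \<Longrightarrow> integrable M (\<lambda>w. (cmod (f w))\<^sup>2)"
  unfolding square_integrable_def by simp

lemma square_integrable_of_real:
  "g \<in> borel_measurable M \<Longrightarrow> integrable M (\<lambda>w. (g w)\<^sup>2) \<Longrightarrow>
    square_integrable M (\<lambda>w. complex_of_real (g w))"
  unfolding square_integrable_def by simp

lemma square_integrableI_mult_cnj:
  assumes "f \<in> borel_measurable M" "integrable M (\<lambda>w. f w * cnj (f w))"
  shows "square_integrable M f"
  using integrable_norm[OF assms(2)] assms(1)
  by (simp add: square_integrable_def norm_mult power2_eq_square)

lemma (in finite_measure) square_integrable_const [simp]: "square_integrable M (\<lambda>w. c)"
  unfolding square_integrable_def by simp

lemma square_integrable_add: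
  assumes "square_integrable M f" "square_integrable M g"
  shows "square_integrable M (\<lambda>w. f w + g w)"
proof -
  have [measurable]: "f \<in> borel_measurable M" "g \<in> borel_measurable M"
    using assms by (auto simp: square_integrable_def)
  have bound: "(cmod (f w + g w))\<^sup>2 \<le> 2 * (cmod (f w))\<^sup>2 + 2 * (cmod (g w))\<^sup>2" for w
  proof -
    have "(cmod (f w + g w))\<^sup>2 \<le> (cmod (f w) + cmod (g w))\<^sup>2"
      by (intro power_mono norm_triangle_ineq) simp
    also have "\<dots> \<le> 2 * (cmod (f w))\<^sup>2 + 2 * (cmod (g w))\<^sup>2"
      using sum_squares_bound[of "cmod (f w)" "cmod (g w)"] by (simp add: power2_sum)
    finally show ?thesis .
  qed
  have "integrable M (\<lambda>w. (cmod (f w + g w))\<^sup>2)"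
  proof (rule Bochner_Integration.integrable_bound)
    show "integrable M (\<lambda>w. 2 * (cmod (f w))\<^sup>2 + 2 * (cmod (g w))\<^sup>2)"
      using assms by (simp add: square_integrable_def)
    show "AE w in M. norm ((cmod (f w + g w))\<^sup>2) \<le> norm (2 * (cmod (f w))\<^sup>2 + 2 * (cmod (g w))\<^sup>2)"
      using bound by (intro AE_I2) (simp add: order.trans[OF _ abs_ge_self])
  qed measurable
  then show ?thesis
    unfolding square_integrable_def by simp
qed

lemma square_integrable_cmult:
  "square_integrable M f \<Longrightarrow> square_integrable M (\<lambda>w. c * f w)"
  unfolding square_integrable_def by (auto simp: norm_mult power_mult_distrib)

lemma square_integrable_uminus: "square_integrable M f \<Longrightarrow> square_integrable M (\<lambda>w. - f w)"
  using square_integrable_cmult[of M f "-1"] by simp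

lemma square_integrable_diff:
  "square_integrable M f \<Longrightarrow> square_integrable M g \<Longrightarrow> square_integrable M (\<lambda>w. f w - g w)"
  using square_integrable_add[of M f "\<lambda>w. - g w"] square_integrable_uminus[of M g] by simp

lemma (in finite_measure) square_integrable_sum:
  "(\<And>i. i \<in> I \<Longrightarrow> square_integrable M (f i)) \<Longrightarrow> square_integrable M (\<lambda>w. \<Sum>i\<in>I. f i w)"
  by (induction I rule: infinite_finite_induct) (auto intro: square_integrable_add)

lemma square_integrable_cnj: "square_integrable M f \<Longrightarrow> square_integrable M (\<lambda>w. cnj (f w))"
  unfolding square_integrable_def by auto

lemma square_integrable_integrable_mult:
  assumes "square_integrable M f" "square_integrable M g"
  shows "integrable M (\<lambda>w. f w * g w)"
proof (rule Bochner_Integration.integrable_bound[of _ "\<lambda>w. (cmod (f w))\<^sup>2 + (cmod (g w))\<^sup>2"])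
  show "integrable M (\<lambda>w. (cmod (f w))\<^sup>2 + (cmod (g w))\<^sup>2)"
    using assms by (simp add: square_integrable_def)
  show "(\<lambda>w. f w * g w) \<in> borel_measurable M"
    using assms by (auto simp: square_integrable_def)
  show "AE w in M. norm (f w * g w) \<le> norm ((cmod (f w))\<^sup>2 + (cmod (g w))\<^sup>2)"
    using abs_mult_le_sum_squares[of "cmod (f w)" "cmod (g w)" for w]
    by (intro AE_I2) (simp add: norm_mult)
qed

lemma (in finite_measure) square_integrable_integrable:
  "square_integrable M f \<Longrightarrow> integrable M f"
  using square_integrable_integrable_mult[of M f "\<lambda>_. 1"] by simp

context prob_space
begin

lemma indep_sets_preimages_if_indep3:
  fixes X :: "'a \<Rightarrow> 'b :: topological_space" and Y :: "'a \<Rightarrow> 'c :: topological_space"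
    and Z :: "'a \<Rightarrow> 'd :: topological_space"
  assumes "indep3 M X Y Z"
  shows "indep_sets (\<lambda>i::nat. if i = 0 then {X -` A \<inter> space M | A. A \<in> sets borel}
                 else if i = 1 then {Y -` A \<inter> space M | A. A \<in> sets borel}
                 else {Z -` A \<inter> space M | A. A \<in> sets borel}) {0, 1, 2}"
proof -
  have preimages: "\<And>X :: 'a \<Rightarrow> 'e :: topological_space.
      sets (vimage_algebra (space M) X borel) = {X -` A \<inter> space M | A. A \<in> sets borel}"
    by (rule sets_vimage_algebra2) simp
  show ?thesis
    using assms unfolding indep3_def preimages .
qed

lemma Int_stable_preimages: "Int_stable {X -` A \<inter> space M | A. A \<in> sets borel}"
proof (rule Int_stableI)
  fix a b assume "a \<in> {X -` A \<inter> space M | A. A \<in> sets borel}" "b \<in> {X -` A \<inter> space M | A. A \<in> sets borel}"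
  then obtain A B where "a = X -` A \<inter> space M" "b = X -` B \<inter> space M" "A \<in> sets borel" "B \<in> sets borel"
    by blast
  then show "a \<inter> b \<in> {X -` A \<inter> space M | A. A \<in> sets borel}"
    by (intro CollectI exI[of _ "A \<inter> B"]) auto
qed

lemma preimages_comp_subset:
  assumes "g \<in> borel_measurable borel"
  shows "{(\<lambda>w. g (X w)) -` A \<inter> space M | A. A \<in> sets borel} \<subseteq> {X -` A \<inter> space M | A. A \<in> sets borel}"
proof safe
  fix A assume "A \<in> sets (borel :: 'c :: topological_space measure)"
  then have "g -` A \<in> sets borel"
    using measurable_sets[OF assms] by simp
  then show "\<exists>B. (\<lambda>w. g (X w)) -` A \<inter> space M = X -` B \<inter> space M \<and> B \<in> sets borel"
    by (intro exI[of _ "g -` A"]) auto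
qed

lemma indep_var_if_preimages_subset:
  fixes F G :: "'a \<Rightarrow> 'b :: topological_space"
  assumes "indep_set SA SB"
    and "F \<in> borel_measurable M" and "G \<in> borel_measurable M"
    and "{F -` A \<inter> space M | A. A \<in> sets borel} \<subseteq> SA"
    and "{G -` A \<inter> space M | A. A \<in> sets borel} \<subseteq> SB"
  shows "indep_var borel F borel G"
proof -
  have "indep_set {F -` A \<inter> space M | A. A \<in> sets borel} {G -` A \<inter> space M | A. A \<in> sets borel}"
    using assms(1) unfolding indep_set_def
    by (rule indep_sets_mono_sets) (use assms(4,5) in \<open>auto split: bool.split\<close>)
  then have "indep_set (sigma_sets (space M) {F -` A \<inter> space M | A. A \<in> sets borel})
       (sigma_sets (space M) {G -` A \<inter> space M | A. A \<in> sets borel})"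
    by (rule indep_set_sigma_sets) (rule Int_stable_preimages)+
  then show ?thesis
    unfolding indep_var_eq using assms(2,3) by simp
qed

lemma indep_var_if_indep3_first_second:
  fixes X :: "'a \<Rightarrow> 'b :: topological_space" and Y :: "'a \<Rightarrow> 'c :: topological_space"
    and Z :: "'a \<Rightarrow> 'd :: topological_space"
    and f :: "'b \<Rightarrow> 'e :: topological_space" and g :: "'c \<Rightarrow> 'e"
  assumes "indep3 M X Y Z"
    and [measurable]: "X \<in> borel_measurable M" "Y \<in> borel_measurable M"
      "f \<in> borel_measurable borel" "g \<in> borel_measurable borel"
  shows "indep_var borel (\<lambda>w. f (X w)) borel (\<lambda>w. g (Y w))"
proof (rule indep_var_if_preimages_subset)
  have "indep_set {X -` A \<inter> space M | A. A \<in> sets borel} {Y -` A \<inter> space M | A. A \<in> sets borel}"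
    unfolding indep_sets2_eq
  proof (intro conjI ballI)
    show "{X -` A \<inter> space M | A. A \<in> sets borel} \<subseteq> events"
      "{Y -` A \<inter> space M | A. A \<in> sets borel} \<subseteq> events"
      by (auto simp: measurable_sets)
    fix a b assume "a \<in> {X -` A \<inter> space M | A. A \<in> sets borel}" "b \<in> {Y -` A \<inter> space M | A. A \<in> sets borel}"
    then have "prob (\<Inter>j\<in>{0::nat, 1}. if j = 0 then a else b) = (\<Prod>j\<in>{0::nat, 1}. prob (if j = 0 then a else b))"
      by (intro indep_setsD[OF indep_sets_preimages_if_indep3[OF assms(1)]]) auto
    then show "prob (a \<inter> b) = prob a * prob b"
      by (simp add: Int_commute)
  qed
  then show "indep_set {X -` A \<inter> space M | A. A \<in> sets borel} {Y -` A \<inter> space M | A. A \<in> sets borel}" .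
qed (simp_all add: preimages_comp_subset)

lemma indep_set_pair_third_if_indep3:
  fixes X :: "'a \<Rightarrow> 'b :: topological_space" and Y :: "'a \<Rightarrow> 'c :: topological_space"
    and Z :: "'a \<Rightarrow> 'd :: topological_space"
  assumes "indep3 M X Y Z"
  shows "indep_set
    (sigma_sets (space M) ({X -` A \<inter> space M | A. A \<in> sets borel} \<union> {Y -` A \<inter> space M | A. A \<in> sets borel}))
    (sigma_sets (space M) {Z -` A \<inter> space M | A. A \<in> sets borel})"
proof -
  define E where "E = (\<lambda>i::nat. if i = 0 then {X -` A \<inter> space M | A. A \<in> sets borel}
                 else if i = 1 then {Y -` A \<inter> space M | A. A \<in> sets borel}
                 else {Z -` A \<inter> space M | A. A \<in> sets borel})"
  define J where "J = (\<lambda>j::bool. if j then {0::nat, 1} else {2})"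
  have "indep_sets (\<lambda>j. sigma_sets (space M) (\<Union>i\<in>J j. E i)) UNIV"
  proof (rule indep_sets_collect_sigma)
    have "(\<Union>j. J j) = {0, 1, 2}" unfolding J_def by auto
    then show "indep_sets E (\<Union>j\<in>UNIV. J j)"
      using indep_sets_preimages_if_indep3[OF assms] unfolding E_def by simp
    show "disjoint_family_on J UNIV"
      unfolding J_def disjoint_family_on_def by auto
  next
    fix i show "Int_stable (E i)"
      unfolding E_def by (simp add: Int_stable_preimages)
  qed
  moreover have "(\<lambda>j. sigma_sets (space M) (\<Union>i\<in>J j. E i)) =
      case_bool (sigma_sets (space M) (E 0 \<union> E 1)) (sigma_sets (space M) (E 2))"
    unfolding J_def by (auto simp: fun_eq_iff split: bool.split)
  ultimately have "indep_set (sigma_sets (space M) (E 0 \<union> E 1)) (sigma_sets (space M) (E 2))"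
    unfolding indep_set_def by simp
  then show ?thesis
    unfolding E_def by simp
qed

lemma indep_var_if_indep3_pair_third:
  fixes X :: "'a \<Rightarrow> 'b :: second_countable_topology" and Y :: "'a \<Rightarrow> 'c :: second_countable_topology"
    and Z :: "'a \<Rightarrow> 'd :: topological_space"
    and f :: "'b \<times> 'c \<Rightarrow> 'e :: topological_space" and g :: "'d \<Rightarrow> 'e"
  assumes "indep3 M X Y Z"
    and [measurable]: "X \<in> borel_measurable M" "Y \<in> borel_measurable M" "Z \<in> borel_measurable M"
      "f \<in> borel_measurable borel" "g \<in> borel_measurable borel"
  shows "indep_var borel (\<lambda>w. f (X w, Y w)) borel (\<lambda>w. g (Z w))"
proof (rule indep_var_if_preimages_subset[OF indep_set_pair_third_if_indep3[OF assms(1)]])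
  let ?G = "{X -` A \<inter> space M | A. A \<in> sets borel} \<union> {Y -` A \<inter> space M | A. A \<in> sets borel}"
  define N where "N = sigma (space M) ?G"
  have "?G \<subseteq> Pow (space M)"
    by auto
  then have sets_N: "sets N = sigma_sets (space M) ?G" and space_N: "space N = space M"
    unfolding N_def by (simp_all add: sets_measure_of space_measure_of)
  have "X \<in> measurable N borel" "Y \<in> measurable N borel"
    unfolding measurable_def using sets_N space_N by (auto intro: sigma_sets.Basic)
  then have "(\<lambda>w. (X w, Y w)) \<in> measurable N (borel \<Otimes>\<^sub>M borel)"
    by (intro measurable_Pair)
  then have "(\<lambda>w. f (X w, Y w)) \<in> measurable N borel"
    by (simp add: borel_prod)
  then show "{(\<lambda>w. f (X w, Y w)) -` A \<inter> space M | A. A \<in> sets borel} \<subseteq> sigma_sets (space M) ?G"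
    using measurable_sets[of "\<lambda>w. f (X w, Y w)" N borel] sets_N space_N by auto
  show "{(\<lambda>w. g (Z w)) -` A \<inter> space M | A. A \<in> sets borel}
      \<subseteq> sigma_sets (space M) {Z -` A \<inter> space M | A. A \<in> sets borel}"
    using preimages_comp_subset[of g Z] sigma_sets_superset_generator[of _ "space M"]
    by (rule order.trans) measurable
qed measurable

end

section \<open>Linear minimum mean squared error estimation\<close>

lemma frob_norm_square: "(frob_norm B)\<^sup>2 = (\<Sum>i\<in>UNIV. \<Sum>j\<in>UNIV. (cmod (B $ i $ j))\<^sup>2)"
  unfolding frob_norm_def by (rule real_sqrt_pow2) (intro sum_nonneg, simp)

lemma frob_norm_minus_commute: "frob_norm (A - B) = frob_norm (B - A)"
  unfolding frob_norm_def by (simp add: norm_minus_commute)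

lemma trace_cadj_mult: "trace (cadj P ** Q) = (\<Sum>i\<in>UNIV. \<Sum>j\<in>UNIV. cnj (P $ i $ j) * Q $ i $ j)"
  unfolding trace_def matrix_matrix_mult_def cadj_def by simp (rule sum.swap)

lemma cmod_add_square: "(cmod (a + b))\<^sup>2 = (cmod a)\<^sup>2 + (cmod b)\<^sup>2 + 2 * Re (cnj a * b)"
  by (simp only: cmod_power2) (simp add: power2_eq_square algebra_simps)

lemma sum_matrix_vector_mult_scaleR:
  fixes P :: "real ^ 'm ^ 'm" and V :: "'m \<Rightarrow> 'a :: real_vector"
  shows "(\<Sum>m\<in>UNIV. (P *v v) $ m *\<^sub>R V m) = (\<Sum>l\<in>UNIV. v $ l *\<^sub>R (\<Sum>m\<in>UNIV. P $ m $ l *\<^sub>R V m))"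
proof -
  have "(\<Sum>m\<in>UNIV. (P *v v) $ m *\<^sub>R V m) = (\<Sum>m\<in>UNIV. \<Sum>l\<in>UNIV. (P $ m $ l * v $ l) *\<^sub>R V m)"
    unfolding matrix_vector_mult_def by (simp add: scaleR_sum_left)
  also have "\<dots> = (\<Sum>l\<in>UNIV. v $ l *\<^sub>R (\<Sum>m\<in>UNIV. P $ m $ l *\<^sub>R V m))"
    by (subst sum.swap) (simp add: scaleR_sum_right mult.commute)
  finally show ?thesis .
qed

lemma affine_form_sum_matrix_vector_mult:
  fixes P :: "real ^ 'm ^ 'm" and V :: "'m \<Rightarrow> 'a :: real_vector"
  shows "\<exists>W0 W. \<forall>w. E0 + (\<Sum>m\<in>UNIV. (P *v (u w - c)) $ m *\<^sub>R V m) = W0 + (\<Sum>l\<in>UNIV. u w $ l *\<^sub>R W l)"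
proof (intro exI allI)
  fix w
  show "E0 + (\<Sum>m\<in>UNIV. (P *v (u w - c)) $ m *\<^sub>R V m)
      = (E0 - (\<Sum>m\<in>UNIV. (P *v c) $ m *\<^sub>R V m)) + (\<Sum>l\<in>UNIV. u w $ l *\<^sub>R (\<Sum>m\<in>UNIV. P $ m $ l *\<^sub>R V m))"
    by (simp add: matrix_vector_mult_diff_distrib scaleR_diff_left sum_subtractf
        flip: sum_matrix_vector_mult_scaleR)
qed

locale linear_mmse = prob_space M for M :: "'w measure" +
  fixes Y :: "'m :: finite \<Rightarrow> 'w \<Rightarrow> real" and T :: "real ^ 'm ^ 'm"
  assumes borel_measurable_Y [measurable]: "Y l \<in> borel_measurable M"
    and integrable_Y_square: "integrable M (\<lambda>w. (Y l w)\<^sup>2)"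
    and expectation_Y: "expectation (Y l) = 0"
    and expectation_Y_mult: "expectation (\<lambda>w. Y k w * Y l w) = T $ k $ l"
    and invertible_T: "invertible T"
begin

lemma T_sym: "T $ k $ l = T $ l $ k"
  using expectation_Y_mult[of k l] expectation_Y_mult[of l k] by (simp add: mult.commute)

lemma matrix_inv_T_mult_T: "(\<Sum>l\<in>UNIV. matrix_inv T $ m $ l * T $ l $ k) = (if m = k then 1 else 0)"
proof -
  have "\<exists>T'. T ** T' = mat 1 \<and> T' ** T = mat 1"
    using invertible_T unfolding invertible_def .
  then have "matrix_inv T ** T = mat 1"
    unfolding matrix_inv_def by (rule someI2_ex) simp
  then show ?thesis
    unfolding matrix_matrix_mult_def mat_def by (simp add: vec_eq_iff)
qed

lemma square_integrable_Y: "square_integrable M (\<lambda>w. complex_of_real (Y l w))"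
  by (rule square_integrable_of_real) (simp_all add: integrable_Y_square)

lemma integrable_Y: "integrable M (\<lambda>w. complex_of_real (Y l w))"
  by (rule square_integrable_integrable[OF square_integrable_Y])

lemma expectation_of_real_Y: "expectation (\<lambda>w. complex_of_real (Y l w)) = 0"
  using expectation_Y[of l] by (simp add: integral_complex_of_real)

lemma expectation_of_real_Y_mult:
  "expectation (\<lambda>w. complex_of_real (Y k w) * complex_of_real (Y l w)) = of_real (T $ k $ l)"
  using expectation_Y_mult[of k l] integral_complex_of_real[of M "\<lambda>w. Y k w * Y l w"] by simp

definition affine_in_Y :: "('w \<Rightarrow> complex) \<Rightarrow> bool" where
  "affine_in_Y h \<longleftrightarrow> (\<exists>c0 c. h = (\<lambda>w. c0 + (\<Sum>l\<in>UNIV. c l * of_real (Y l w))))"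

lemma affine_in_Y_const: "affine_in_Y (\<lambda>w. c)"
  unfolding affine_in_Y_def by (intro exI[of _ c] exI[of _ "\<lambda>_. 0"]) simp

lemma affine_in_Y_diff:
  assumes "affine_in_Y h1" "affine_in_Y h2"
  shows "affine_in_Y (\<lambda>w. h1 w - h2 w)"
proof -
  obtain c0 c d0 d where "h1 = (\<lambda>w. c0 + (\<Sum>l\<in>UNIV. c l * of_real (Y l w)))"
    "h2 = (\<lambda>w. d0 + (\<Sum>l\<in>UNIV. d l * of_real (Y l w)))"
    using assms unfolding affine_in_Y_def by blast
  then show ?thesis
    unfolding affine_in_Y_def
    by (intro exI[of _ "c0 - d0"] exI[of _ "\<lambda>l. c l - d l"])
       (simp add: fun_eq_iff sum_subtractf left_diff_distrib)
qed

lemma affine_in_Y_cnj: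
  assumes "affine_in_Y h"
  shows "affine_in_Y (\<lambda>w. cnj (h w))"
proof -
  obtain c0 c where "h = (\<lambda>w. c0 + (\<Sum>l\<in>UNIV. c l * of_real (Y l w)))"
    using assms unfolding affine_in_Y_def by blast
  then show ?thesis
    unfolding affine_in_Y_def
    by (intro exI[of _ "cnj c0"] exI[of _ "\<lambda>l. cnj (c l)"]) (simp add: fun_eq_iff)
qed

lemma square_integrable_if_affine_in_Y: "affine_in_Y h \<Longrightarrow> square_integrable M h"
  unfolding affine_in_Y_def using square_integrable_Y
  by (auto intro!: square_integrable_add square_integrable_sum square_integrable_cmult)

lemma affine_in_Y_matrix_entry:
  "affine_in_Y (\<lambda>w. (W0 + (\<Sum>m\<in>UNIV. (Y m w + c m) *\<^sub>R W m)) $ i $ j)"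
proof -
  have "(W0 + (\<Sum>m\<in>UNIV. (Y m w + c m) *\<^sub>R W m)) $ i $ j
      = (W0 $ i $ j + (\<Sum>m\<in>UNIV. of_real (c m) * W m $ i $ j)) + (\<Sum>m\<in>UNIV. W m $ i $ j * of_real (Y m w))" for w
  proof -
    have "(W0 + (\<Sum>m\<in>UNIV. (Y m w + c m) *\<^sub>R W m)) $ i $ j
        = W0 $ i $ j + (\<Sum>m\<in>UNIV. (Y m w + c m) *\<^sub>R (W m $ i $ j))"
      by (simp add: sum_component)
    then show ?thesis
      by (simp add: scaleR_conv_of_real algebra_simps sum.distrib)
  qed
  then show ?thesis
    unfolding affine_in_Y_def
    by (intro exI[of _ "W0 $ i $ j + (\<Sum>m\<in>UNIV. of_real (c m) * W m $ i $ j)"]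
        exI[of _ "\<lambda>m. W m $ i $ j"]) (simp add: fun_eq_iff)
qed

text \<open>\<open>lmmse_estimate \<mu> v\<close> is the estimator of the theorem, \<open>\<mu> + \<Sum>\<^sub>m (T\<^sup>-\<^sup>1 Y)\<^sub>m v\<^sub>m\<close>,
  for a target with mean \<open>\<mu>\<close> and cross-covariances \<open>v l = E[Y\<^sub>l X]\<close>; \<open>lmmse_gain\<close> gives its
  coefficients as an affine function of \<open>Y\<close>.\<close>

definition lmmse_estimate :: "complex \<Rightarrow> ('m \<Rightarrow> complex) \<Rightarrow> 'w \<Rightarrow> complex" where
  "lmmse_estimate \<mu> v w = \<mu> + (\<Sum>m\<in>UNIV. of_real ((matrix_inv T *v (\<chi> l. Y l w)) $ m) * v m)"

definition lmmse_gain :: "('m \<Rightarrow> complex) \<Rightarrow> 'm \<Rightarrow> complex" where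
  "lmmse_gain v l = (\<Sum>m\<in>UNIV. of_real (matrix_inv T $ m $ l) * v m)"

lemma lmmse_estimate_eq: "lmmse_estimate \<mu> v w = \<mu> + (\<Sum>l\<in>UNIV. lmmse_gain v l * of_real (Y l w))"
proof -
  have "(\<Sum>m\<in>UNIV. of_real ((matrix_inv T *v (\<chi> l. Y l w)) $ m) * v m)
      = (\<Sum>m\<in>UNIV. \<Sum>l\<in>UNIV. of_real (matrix_inv T $ m $ l) * v m * of_real (Y l w))"
    by (simp add: matrix_vector_mult_def sum_distrib_left sum_distrib_right mult_ac)
  also have "\<dots> = (\<Sum>l\<in>UNIV. lmmse_gain v l * of_real (Y l w))"
    unfolding lmmse_gain_def by (subst sum.swap) (simp add: sum_distrib_right)
  finally show ?thesis
    unfolding lmmse_estimate_def by simp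
qed

lemma affine_in_Y_lmmse_estimate: "affine_in_Y (lmmse_estimate \<mu> v)"
  unfolding affine_in_Y_def lmmse_estimate_eq[abs_def] by blast

lemma lmmse_gain_mult_T: "(\<Sum>l\<in>UNIV. lmmse_gain v l * of_real (T $ l $ k)) = v k"
proof -
  have "(\<Sum>l\<in>UNIV. lmmse_gain v l * of_real (T $ l $ k))
      = (\<Sum>l\<in>UNIV. \<Sum>m\<in>UNIV. v m * of_real (matrix_inv T $ m $ l * T $ l $ k))"
    unfolding lmmse_gain_def by (simp add: sum_distrib_left sum_distrib_right mult_ac)
  also have "\<dots> = (\<Sum>m\<in>UNIV. v m * of_real (\<Sum>l\<in>UNIV. matrix_inv T $ m $ l * T $ l $ k))"
    by (subst sum.swap) (simp add: sum_distrib_left)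
  also have "\<dots> = v k"
    by (simp add: matrix_inv_T_mult_T if_distrib cong: if_cong)
  finally show ?thesis .
qed

lemma lmmse_gain_quadratic_form:
  "(\<Sum>l\<in>UNIV. \<Sum>l'\<in>UNIV. cnj (lmmse_gain v l) * lmmse_gain v l' * of_real (T $ l $ l'))
     = (\<Sum>m\<in>UNIV. \<Sum>m'\<in>UNIV. of_real (matrix_inv T $ m $ m') * (cnj (v m) * v m'))"
proof -
  have "(\<Sum>l\<in>UNIV. \<Sum>l'\<in>UNIV. cnj (lmmse_gain v l) * lmmse_gain v l' * of_real (T $ l $ l'))
      = (\<Sum>l\<in>UNIV. cnj (lmmse_gain v l) * (\<Sum>l'\<in>UNIV. lmmse_gain v l' * of_real (T $ l' $ l)))"
    by (simp add: sum_distrib_left T_sym mult.assoc)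
  also have "\<dots> = (\<Sum>l\<in>UNIV. cnj (lmmse_gain v l) * v l)"
    by (simp only: lmmse_gain_mult_T)
  also have "\<dots> = (\<Sum>l\<in>UNIV. \<Sum>m\<in>UNIV. of_real (matrix_inv T $ m $ l) * (cnj (v m) * v l))"
    unfolding lmmse_gain_def by (simp add: sum_distrib_left sum_distrib_right mult_ac)
  also have "\<dots> = (\<Sum>m\<in>UNIV. \<Sum>m'\<in>UNIV. of_real (matrix_inv T $ m $ m') * (cnj (v m) * v m'))"
    by (rule sum.swap)
  finally show ?thesis .
qed

context
  fixes X :: "'w \<Rightarrow> complex" and \<mu> :: complex and v :: "'m \<Rightarrow> complex"
  assumes square_integrable_X: "square_integrable M X"
    and expectation_X: "expectation X = \<mu>"
    and expectation_Y_mult_X: "expectation (\<lambda>w. of_real (Y l w) * X w) = v l"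
begin

lemma square_integrable_lmmse_error: "square_integrable M (\<lambda>w. lmmse_estimate \<mu> v w - X w)"
  using square_integrable_if_affine_in_Y[OF affine_in_Y_lmmse_estimate] square_integrable_X
  by (rule square_integrable_diff)

lemma expectation_lmmse_error: "expectation (\<lambda>w. lmmse_estimate \<mu> v w - X w) = 0"
proof -
  have "expectation (lmmse_estimate \<mu> v) = \<mu>"
    unfolding lmmse_estimate_eq[abs_def] using integrable_Y expectation_of_real_Y by (simp add: prob_space)
  then show ?thesis
    using square_integrable_integrable[OF square_integrable_X] expectation_X
      square_integrable_integrable[OF square_integrable_if_affine_in_Y[OF affine_in_Y_lmmse_estimate]]
    by simp
qed

lemma expectation_Y_mult_lmmse_error:
  "expectation (\<lambda>w. of_real (Y k w) * (lmmse_estimate \<mu> v w - X w)) = 0"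
proof -
  have "(\<lambda>w. of_real (Y k w) * (lmmse_estimate \<mu> v w - X w)) = (\<lambda>w. \<mu> * of_real (Y k w)
      + (\<Sum>l\<in>UNIV. lmmse_gain v l * (of_real (Y k w) * of_real (Y l w))) - of_real (Y k w) * X w)"
    unfolding lmmse_estimate_eq by (simp add: fun_eq_iff algebra_simps sum_distrib_left)
  moreover have "integrable M (\<lambda>w. of_real (Y k w) * X w)"
    "\<And>l. integrable M (\<lambda>w. of_real (Y k w) * of_real (Y l w) :: complex)"
    using square_integrable_Y square_integrable_X by (auto intro: square_integrable_integrable_mult)
  ultimately have "expectation (\<lambda>w. of_real (Y k w) * (lmmse_estimate \<mu> v w - X w))
      = (\<Sum>l\<in>UNIV. lmmse_gain v l * of_real (T $ k $ l)) - v k"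
    using integrable_Y expectation_of_real_Y expectation_of_real_Y_mult expectation_Y_mult_X by simp
  then show ?thesis
    using lmmse_gain_mult_T T_sym by simp
qed

lemma lmmse_error_orthogonal:
  assumes "affine_in_Y h"
  shows "expectation (\<lambda>w. h w * (lmmse_estimate \<mu> v w - X w)) = 0"
proof -
  obtain c0 c where h: "h = (\<lambda>w. c0 + (\<Sum>l\<in>UNIV. c l * of_real (Y l w)))"
    using assms unfolding affine_in_Y_def by blast
  have "(\<lambda>w. h w * (lmmse_estimate \<mu> v w - X w)) = (\<lambda>w. c0 * (lmmse_estimate \<mu> v w - X w)
      + (\<Sum>l\<in>UNIV. c l * (of_real (Y l w) * (lmmse_estimate \<mu> v w - X w))))"
    unfolding h by (simp add: fun_eq_iff distrib_right sum_distrib_right mult.assoc)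
  moreover have "integrable M (\<lambda>w. lmmse_estimate \<mu> v w - X w)"
    "\<And>l. integrable M (\<lambda>w. of_real (Y l w) * (lmmse_estimate \<mu> v w - X w))"
    using square_integrable_lmmse_error square_integrable_Y
    by (auto intro: square_integrable_integrable square_integrable_integrable_mult)
  ultimately show ?thesis
    using expectation_lmmse_error expectation_Y_mult_lmmse_error by simp
qed

lemma lmmse_pythagoras:
  assumes "affine_in_Y h"
  shows "expectation (\<lambda>w. (cmod (h w - X w))\<^sup>2)
       = expectation (\<lambda>w. (cmod (h w - lmmse_estimate \<mu> v w))\<^sup>2)
         + expectation (\<lambda>w. (cmod (lmmse_estimate \<mu> v w - X w))\<^sup>2)"
proof -
  let ?d = "\<lambda>w. h w - lmmse_estimate \<mu> v w" and ?e = "\<lambda>w. lmmse_estimate \<mu> v w - X w"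
  have affine_d: "affine_in_Y ?d"
    by (rule affine_in_Y_diff[OF assms affine_in_Y_lmmse_estimate])
  have pointwise: "(cmod (h w - X w))\<^sup>2 = (cmod (?d w))\<^sup>2 + (cmod (?e w))\<^sup>2 + 2 * Re (cnj (?d w) * ?e w)" for w
    using cmod_add_square[of "?d w" "?e w"] by simp
  have int_d: "integrable M (\<lambda>w. (cmod (?d w))\<^sup>2)"
    by (rule square_integrable_integrable_norm_square[OF square_integrable_if_affine_in_Y[OF affine_d]])
  have int_e: "integrable M (\<lambda>w. (cmod (?e w))\<^sup>2)"
    by (rule square_integrable_integrable_norm_square[OF square_integrable_lmmse_error])
  have int_cross: "integrable M (\<lambda>w. cnj (?d w) * ?e w)"
    by (rule square_integrable_integrable_mult[OF square_integrable_cnj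
        [OF square_integrable_if_affine_in_Y[OF affine_d]] square_integrable_lmmse_error])
  have "expectation (\<lambda>w. Re (cnj (?d w) * ?e w)) = 0"
    unfolding integral_Re[OF int_cross] lmmse_error_orthogonal[OF affine_in_Y_cnj[OF affine_d]]
    by simp
  moreover have "integrable M (\<lambda>w. 2 * Re (cnj (?d w) * ?e w))"
    by (intro integrable_mult_right integrable_Re[OF int_cross])
  ultimately show ?thesis
    using int_d int_e
    by (simp only: pointwise Bochner_Integration.integral_add Bochner_Integration.integrable_add
        integral_mult_right_zero mult_zero_right add_0_right)
qed

lemma lmmse_mse:
  "complex_of_real (expectation (\<lambda>w. (cmod (lmmse_estimate \<mu> v w - X w))\<^sup>2))
     = complex_of_real (expectation (\<lambda>w. (cmod (\<mu> - X w))\<^sup>2))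
       - (\<Sum>m\<in>UNIV. \<Sum>m'\<in>UNIV. of_real (matrix_inv T $ m $ m') * (cnj (v m) * v m'))"
proof -
  let ?g = "lmmse_gain v"
  have "complex_of_real ((cmod (\<mu> - lmmse_estimate \<mu> v w))\<^sup>2)
      = (\<Sum>l\<in>UNIV. \<Sum>l'\<in>UNIV. cnj (?g l) * ?g l' * (of_real (Y l w) * of_real (Y l' w)))" for w
  proof -
    have "\<mu> - lmmse_estimate \<mu> v w = - (\<Sum>l\<in>UNIV. ?g l * of_real (Y l w))"
      by (simp add: lmmse_estimate_eq)
    then have "complex_of_real ((cmod (\<mu> - lmmse_estimate \<mu> v w))\<^sup>2)
        = cnj (\<Sum>l\<in>UNIV. ?g l * of_real (Y l w)) * (\<Sum>l\<in>UNIV. ?g l * of_real (Y l w))"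
      by (simp only: norm_minus_cancel complex_norm_square) (rule mult.commute)
    also have "\<dots> = (\<Sum>l\<in>UNIV. \<Sum>l'\<in>UNIV. cnj (?g l) * ?g l' * (of_real (Y l w) * of_real (Y l' w)))"
      by (simp add: sum_product mult_ac, subst sum.swap, simp add: mult_ac)
    finally show ?thesis .
  qed
  moreover have "integrable M (\<lambda>w. of_real (Y l w) * of_real (Y l' w) :: complex)" for l l'
    using square_integrable_Y square_integrable_Y by (rule square_integrable_integrable_mult)
  ultimately have "complex_of_real (expectation (\<lambda>w. (cmod (\<mu> - lmmse_estimate \<mu> v w))\<^sup>2))
      = (\<Sum>l\<in>UNIV. \<Sum>l'\<in>UNIV. cnj (?g l) * ?g l' * of_real (T $ l $ l'))"
    by (simp add: expectation_of_real_Y_mult flip: integral_complex_of_real)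
  also have "\<dots> = (\<Sum>m\<in>UNIV. \<Sum>m'\<in>UNIV. of_real (matrix_inv T $ m $ m') * (cnj (v m) * v m'))"
    by (rule lmmse_gain_quadratic_form)
  finally show ?thesis
    using lmmse_pythagoras[OF affine_in_Y_const[of \<mu>]] by simp
qed

end

definition lmmse_matrix :: "complex ^ 'n ^ 'n \<Rightarrow> ('m \<Rightarrow> complex ^ 'n ^ 'n) \<Rightarrow> 'w \<Rightarrow> complex ^ 'n ^ 'n" where
  "lmmse_matrix E0 V w = E0 + (\<Sum>m\<in>UNIV. (matrix_inv T *v (\<chi> l. Y l w)) $ m *\<^sub>R V m)"

lemma lmmse_matrix_nth: "lmmse_matrix E0 V w $ i $ j = lmmse_estimate (E0 $ i $ j) (\<lambda>m. V m $ i $ j) w"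
  by (simp add: lmmse_matrix_def sum_component) (simp add: lmmse_estimate_def scaleR_conv_of_real)

lemma affine_in_Y_lmmse_matrix_nth: "affine_in_Y (\<lambda>w. lmmse_matrix E0 V w $ i $ j)"
  unfolding lmmse_matrix_nth by (rule affine_in_Y_lmmse_estimate)

context
  fixes X :: "'w \<Rightarrow> complex ^ 'n ^ 'n" and E0 :: "complex ^ 'n ^ 'n" and V :: "'m \<Rightarrow> complex ^ 'n ^ 'n"
  assumes square_integrable_X_nth: "square_integrable M (\<lambda>w. X w $ i $ j)"
    and expectation_X_nth: "expectation (\<lambda>w. X w $ i $ j) = E0 $ i $ j"
    and expectation_Y_mult_X_nth: "expectation (\<lambda>w. of_real (Y l w) * X w $ i $ j) = V l $ i $ j"
begin

lemma expectation_frob_norm_square: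
  assumes "\<And>i j. affine_in_Y (\<lambda>w. F w $ i $ j)"
  shows "expectation (\<lambda>w. (frob_norm (F w - X w))\<^sup>2)
     = (\<Sum>i\<in>UNIV. \<Sum>j\<in>UNIV. expectation (\<lambda>w. (cmod (F w $ i $ j - X w $ i $ j))\<^sup>2))"
proof -
  have "integrable M (\<lambda>w. (cmod (F w $ i $ j - X w $ i $ j))\<^sup>2)" for i j
    using square_integrable_diff[OF square_integrable_if_affine_in_Y[OF assms] square_integrable_X_nth]
    by (rule square_integrable_integrable_norm_square)
  then show ?thesis
    unfolding frob_norm_square by (simp add: Bochner_Integration.integral_sum Bochner_Integration.integrable_sum)
qed

lemma lmmse_matrix_pythagoras:
  assumes affine: "\<And>i j. affine_in_Y (\<lambda>w. F w $ i $ j)"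
  shows "expectation (\<lambda>w. (frob_norm (F w - X w))\<^sup>2)
     = (\<Sum>i\<in>UNIV. \<Sum>j\<in>UNIV. expectation (\<lambda>w. (cmod (F w $ i $ j - lmmse_matrix E0 V w $ i $ j))\<^sup>2))
       + expectation (\<lambda>w. (frob_norm (lmmse_matrix E0 V w - X w))\<^sup>2)"
  unfolding expectation_frob_norm_square[OF affine] expectation_frob_norm_square[OF affine_in_Y_lmmse_matrix_nth]
    lmmse_pythagoras[OF square_integrable_X_nth expectation_X_nth expectation_Y_mult_X_nth affine]
  by (simp add: lmmse_matrix_nth sum.distrib)

lemma lmmse_matrix_optimal:
  assumes "\<And>i j. affine_in_Y (\<lambda>w. F w $ i $ j)"
  shows "expectation (\<lambda>w. (frob_norm (lmmse_matrix E0 V w - X w))\<^sup>2)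
     \<le> expectation (\<lambda>w. (frob_norm (F w - X w))\<^sup>2)"
  unfolding lmmse_matrix_pythagoras[OF assms]
  by (simp add: sum_nonneg Bochner_Integration.integral_nonneg)

lemma lmmse_matrix_unique:
  assumes affine: "\<And>i j. affine_in_Y (\<lambda>w. F w $ i $ j)"
    and optimal: "expectation (\<lambda>w. (frob_norm (F w - X w))\<^sup>2)
      = expectation (\<lambda>w. (frob_norm (lmmse_matrix E0 V w - X w))\<^sup>2)"
  shows "AE w in M. F w = lmmse_matrix E0 V w"
proof -
  let ?f = "\<lambda>i j w. (cmod (F w $ i $ j - lmmse_matrix E0 V w $ i $ j))\<^sup>2"
  have nonneg: "0 \<le> expectation (?f i j)" for i j
    by (simp add: Bochner_Integration.integral_nonneg)
  have "(\<Sum>i\<in>UNIV. \<Sum>j\<in>UNIV. expectation (?f i j)) = 0"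
    using optimal unfolding lmmse_matrix_pythagoras[OF affine] by simp
  then have "expectation (?f i j) = 0" for i j
    using nonneg by (simp add: sum_nonneg sum_nonneg_eq_0_iff)
  moreover have "integrable M (?f i j)" for i j
    by (rule square_integrable_integrable_norm_square[OF square_integrable_if_affine_in_Y
          [OF affine_in_Y_diff[OF affine affine_in_Y_lmmse_matrix_nth]]])
  ultimately have "AE w in M. ?f i j w = 0" for i j
    by (subst (asm) integral_nonneg_eq_0_iff_AE) auto
  then have "AE w in M. \<forall>i\<in>UNIV. \<forall>j\<in>UNIV. F w $ i $ j = lmmse_matrix E0 V w $ i $ j"
    by (intro AE_finite_allI) simp_all
  then show ?thesis
    by eventually_elim (simp add: vec_eq_iff)
qed

lemma lmmse_matrix_mse:
  "complex_of_real (expectation (\<lambda>w. (frob_norm (lmmse_matrix E0 V w - X w))\<^sup>2))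
     = complex_of_real (expectation (\<lambda>w. (frob_norm (X w - E0))\<^sup>2))
       - (\<Sum>m\<in>UNIV. \<Sum>m'\<in>UNIV. of_real (matrix_inv T $ m $ m') * trace (cadj (V m) ** V m'))"
proof -
  let ?t = "\<lambda>i j m m'. of_real (matrix_inv T $ m $ m') * (cnj (V m $ i $ j) * V m' $ i $ j)"
  have "(\<Sum>i\<in>UNIV. \<Sum>j\<in>UNIV. \<Sum>m\<in>UNIV. \<Sum>m'\<in>UNIV. ?t i j m m')
      = (\<Sum>i\<in>UNIV. \<Sum>m\<in>UNIV. \<Sum>j\<in>UNIV. \<Sum>m'\<in>UNIV. ?t i j m m')"
    by (intro sum.cong refl sum.swap)
  also have "\<dots> = (\<Sum>m\<in>UNIV. \<Sum>i\<in>UNIV. \<Sum>m'\<in>UNIV. \<Sum>j\<in>UNIV. ?t i j m m')"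
    by (subst sum.swap) (intro sum.cong refl sum.swap)
  also have "\<dots> = (\<Sum>m\<in>UNIV. \<Sum>m'\<in>UNIV. of_real (matrix_inv T $ m $ m') * trace (cadj (V m) ** V m'))"
    unfolding trace_cadj_mult by (subst sum.swap) (simp add: sum_distrib_left)
  finally have trace_sum: "(\<Sum>i\<in>UNIV. \<Sum>j\<in>UNIV. \<Sum>m\<in>UNIV. \<Sum>m'\<in>UNIV. ?t i j m m')
      = (\<Sum>m\<in>UNIV. \<Sum>m'\<in>UNIV. of_real (matrix_inv T $ m $ m') * trace (cadj (V m) ** V m'))" .
  have "complex_of_real (expectation (\<lambda>w. (frob_norm (lmmse_matrix E0 V w - X w))\<^sup>2))
      = (\<Sum>i\<in>UNIV. \<Sum>j\<in>UNIV. complex_of_real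
          (expectation (\<lambda>w. (cmod (lmmse_estimate (E0 $ i $ j) (\<lambda>m. V m $ i $ j) w - X w $ i $ j))\<^sup>2)))"
    unfolding expectation_frob_norm_square[OF affine_in_Y_lmmse_matrix_nth] by (simp add: lmmse_matrix_nth)
  also have "\<dots> = (\<Sum>i\<in>UNIV. \<Sum>j\<in>UNIV. complex_of_real (expectation (\<lambda>w. (cmod (E0 $ i $ j - X w $ i $ j))\<^sup>2))
      - (\<Sum>m\<in>UNIV. \<Sum>m'\<in>UNIV. ?t i j m m'))"
    unfolding lmmse_mse[OF square_integrable_X_nth expectation_X_nth expectation_Y_mult_X_nth] ..
  also have "\<dots> = complex_of_real (expectation (\<lambda>w. (frob_norm (E0 - X w))\<^sup>2))
      - (\<Sum>m\<in>UNIV. \<Sum>m'\<in>UNIV. of_real (matrix_inv T $ m $ m') * trace (cadj (V m) ** V m'))"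
    unfolding expectation_frob_norm_square[OF affine_in_Y_const] trace_sum[symmetric]
    by (simp add: sum_subtractf)
  finally show ?thesis
    by (simp add: frob_norm_minus_commute[of "X _"])
qed

end

end

definition cinner :: "complex ^ 'n \<Rightarrow> complex ^ 'n \<Rightarrow> complex" where
  "cinner w v = (\<Sum>i\<in>UNIV. cnj (w $ i) * v $ i)"

definition sesq_form :: "complex ^ 'n ^ 'n \<Rightarrow> complex ^ 'n \<Rightarrow> complex ^ 'n \<Rightarrow> complex" where
  "sesq_form C w v = (\<Sum>i\<in>UNIV. \<Sum>j\<in>UNIV. cnj (w $ i) * C $ i $ j * v $ j)"

lemma borel_measurable_cinner [measurable (raw)]:
  "f \<in> borel_measurable M \<Longrightarrow> (\<lambda>x. cinner w (f x)) \<in> borel_measurable M"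
  unfolding cinner_def by measurable

lemma cadj_nth: "cadj A $ i $ j = cnj (A $ j $ i)"
  by (simp add: cadj_def)

lemma cinner_zero_left [simp]: "cinner 0 v = 0"
  by (simp add: cinner_def)

lemma sesq_form_zero_left [simp]: "sesq_form C 0 v = 0"
  by (simp add: sesq_form_def)

lemma sesq_form_zero_right [simp]: "sesq_form C w 0 = 0"
  by (simp add: sesq_form_def)

lemma cinner_add_left: "cinner (a + b) v = cinner a v + cinner b v"
  unfolding cinner_def by (simp add: sum.distrib algebra_simps)

lemma cinner_add_right: "cinner w (a + b) = cinner w a + cinner w b"
  unfolding cinner_def by (simp add: sum.distrib algebra_simps)

lemma cinner_commute: "cinner b a = cnj (cinner a b)"
  unfolding cinner_def by (simp add: mult.commute)

lemma cinner_smult_left: "cinner (c *s a) v = cnj c * cinner a v"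
  unfolding cinner_def by (simp add: sum_distrib_left mult.assoc)

lemma cinner_smult_right: "cinner w (c *s v) = c * cinner w v"
  unfolding cinner_def by (simp add: sum_distrib_left mult.left_commute)

lemma cinner_axis_left: "cinner (axis k c) v = cnj c * v $ k"
proof -
  have "cnj (axis k c $ i) * v $ i = (if i = k then cnj c * v $ k else 0)" for i
    by (simp add: axis_def)
  then show ?thesis
    unfolding cinner_def by simp
qed

lemma cinner_axis_right: "cinner w (axis k c) = cnj (w $ k) * c"
proof -
  have "cnj (w $ i) * axis k c $ i = (if i = k then cnj (w $ k) * c else 0)" for i
    by (simp add: axis_def)
  then show ?thesis
    unfolding cinner_def by simp
qed

lemma cinner_matrix_vector_mult: "cinner w (A *v v) = cinner (cadj A *v w) v"
proof -
  have "cinner w (A *v v) = (\<Sum>m\<in>UNIV. \<Sum>i\<in>UNIV. cnj (w $ m) * A $ m $ i * v $ i)"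
    unfolding cinner_def matrix_vector_mult_def by (simp add: sum_distrib_left mult.assoc)
  also have "\<dots> = (\<Sum>i\<in>UNIV. \<Sum>m\<in>UNIV. cnj (w $ m) * A $ m $ i * v $ i)"
    by (rule sum.swap)
  also have "\<dots> = cinner (cadj A *v w) v"
    unfolding cinner_def matrix_vector_mult_def cadj_def
    by (simp add: sum_distrib_left sum_distrib_right mult.commute mult.left_commute)
  finally show ?thesis .
qed

lemma cadj_mult_axis_nth: "(cadj A *v axis k c) $ i = cnj (A $ k $ i) * c"
  unfolding matrix_vector_mult_def cadj_def axis_def by (simp add: if_distrib cong: if_cong)

lemma sesq_form_add_left: "sesq_form C (a + b) v = sesq_form C a v + sesq_form C b v"
  unfolding sesq_form_def by (simp add: sum.distrib distrib_left distrib_right)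

lemma sesq_form_smult_left: "sesq_form C (c *s a) v = cnj c * sesq_form C a v"
  unfolding sesq_form_def by (simp add: sum_distrib_left mult.assoc)

lemma sesq_form_smult_right: "sesq_form C w (c *s v) = c * sesq_form C w v"
  unfolding sesq_form_def by (simp add: sum_distrib_left mult.left_commute mult.assoc)

lemma sesq_form_axis: "sesq_form C (axis k a) (axis l b) = cnj a * C $ k $ l * b"
proof -
  have "cnj (axis k a $ i) * C $ i $ j * axis l b $ j
      = (if j = l then if i = k then cnj a * C $ k $ l * b else 0 else 0)" for i j
    by (simp add: axis_def)
  then show ?thesis
    unfolding sesq_form_def by simp
qed

lemma sesq_form_scaleR_mat_1: "sesq_form (s *\<^sub>R mat 1) w v = of_real s * cinner w v"
proof -
  have "cnj (w $ i) * (s *\<^sub>R mat 1) $ i $ j * v $ j = (if j = i then s *\<^sub>R (cnj (w $ i) * v $ i) else 0)" for i j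
    by (simp add: mat_def)
  then have "sesq_form (s *\<^sub>R mat 1) w v = s *\<^sub>R cinner w v"
    unfolding sesq_form_def cinner_def by (simp add: scaleR_sum_right)
  then show ?thesis
    by (simp add: scaleR_conv_of_real)
qed

lemma sesq_form_hermitian:
  assumes "\<And>i j. C $ i $ j = cnj (C $ j $ i)"
  shows "sesq_form C b a = cnj (sesq_form C a b)"
proof -
  have "cnj (C $ i $ j) = C $ j $ i" for i j
    using assms[of j i] by simp
  then have "cnj (sesq_form C a b) = (\<Sum>i\<in>UNIV. \<Sum>j\<in>UNIV. cnj (b $ j) * C $ j $ i * a $ i)"
    unfolding sesq_form_def by (simp add: mult.commute mult.left_commute)
  also have "\<dots> = sesq_form C b a"
    unfolding sesq_form_def by (rule sum.swap)
  finally show ?thesis by simp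
qed

lemma cscg_vecD:
  assumes "cscg_vec M z C"
  shows "z \<in> borel_measurable M"
    and "C $ i $ j = cnj (C $ j $ i)"
    and "0 \<le> Re (sesq_form C w w) / 2"
    and "distr M borel (\<lambda>\<omega>. Re (cinner w (z \<omega>))) = gauss_measure 0 (Re (sesq_form C w w) / 2)"
  using assms unfolding cscg_vec_def Let_def cinner_def[symmetric] sesq_form_def[symmetric] by blast+

section \<open>The measurement model\<close>

locale phaseless_model = prob_space M for M :: "'w measure" +
  fixes A :: "complex ^ 'n ^ 'm" and \<sigma>x :: real
    and x :: "'w \<Rightarrow> complex ^ 'n" and ez :: "'w \<Rightarrow> complex ^ 'm" and ey :: "'w \<Rightarrow> real ^ 'm"
    and Cez :: "complex ^ 'm ^ 'm" and eybar :: "real ^ 'm" and Cey :: "real ^ 'm ^ 'm"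
  assumes cscg_x: "cscg_vec M x (\<sigma>x\<^sup>2 *\<^sub>R mat 1 :: complex ^ 'n ^ 'n)"
    and cscg_ez: "cscg_vec M ez Cez"
    and gaussian_ey: "real_gaussian_vec M ey eybar Cey"
    and indep_x_ez_ey: "indep3 M x ez ey"
begin

lemma borel_measurable_x [measurable]: "x \<in> borel_measurable M"
  using cscg_vecD(1)[OF cscg_x] .

lemma borel_measurable_ez [measurable]: "ez \<in> borel_measurable M"
  using cscg_vecD(1)[OF cscg_ez] .

lemma borel_measurable_ey [measurable]: "ey \<in> borel_measurable M"
  using gaussian_ey unfolding real_gaussian_vec_def by blast

lemma Cey_sym: "Cey $ i $ j = Cey $ j $ i"
  using gaussian_ey unfolding real_gaussian_vec_def by blast

definition z :: "'w \<Rightarrow> complex ^ 'm" where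
  "z w = A *v x w + ez w"

abbreviation Cz :: "complex ^ 'm ^ 'm" where
  "Cz \<equiv> Cz_of \<sigma>x A Cez"

text \<open>Since \<open>b\<^sup>H z = (A\<^sup>H b)\<^sup>H x + b\<^sup>H e\<^sup>z\<close>, each functional \<open>Re (a\<^sup>H x) + Re (b\<^sup>H z)\<close> is a sum
  of independent centred Gaussians.\<close>

definition functional :: "(complex ^ 'n) \<times> (complex ^ 'm) \<Rightarrow> 'w \<Rightarrow> real" where
  "functional p w = Re (cinner (fst p) (x w)) + Re (cinner (snd p) (z w))"

definition x_coeff :: "(complex ^ 'n) \<times> (complex ^ 'm) \<Rightarrow> complex ^ 'n" where
  "x_coeff p = fst p + cadj A *v snd p"

definition functional_hcov :: "(complex ^ 'n) \<times> (complex ^ 'm) \<Rightarrow> (complex ^ 'n) \<times> (complex ^ 'm) \<Rightarrow> complex" where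
  "functional_hcov p q = of_real (\<sigma>x\<^sup>2) * cinner (x_coeff p) (x_coeff q) + sesq_form Cez (snd p) (snd q)"

definition functional_cov :: "(complex ^ 'n) \<times> (complex ^ 'm) \<Rightarrow> (complex ^ 'n) \<times> (complex ^ 'm) \<Rightarrow> real" where
  "functional_cov p q = Re (functional_hcov p q) / 2"

lemma functional_eq: "functional p w = Re (cinner (x_coeff p) (x w)) + Re (cinner (snd p) (ez w))"
  by (simp add: functional_def z_def x_coeff_def cinner_add_right cinner_add_left cinner_matrix_vector_mult)

lemma borel_measurable_functional [measurable]: "functional p \<in> borel_measurable M"
  unfolding functional_eq[abs_def] by measurable

lemma functional_cov_eq:
  "functional_cov p p = Re (sesq_form (\<sigma>x\<^sup>2 *\<^sub>R mat 1) (x_coeff p) (x_coeff p)) / 2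
     + Re (sesq_form Cez (snd p) (snd p)) / 2"
  unfolding functional_cov_def functional_hcov_def sesq_form_scaleR_mat_1 by simp

lemma functional_cov_nonneg: "0 \<le> functional_cov p p"
  unfolding functional_cov_eq using cscg_vecD(3)[OF cscg_x] cscg_vecD(3)[OF cscg_ez] by simp

lemma distr_functional: "distr M borel (functional p) = gauss_measure 0 (functional_cov p p)"
proof -
  have "indep_var borel (\<lambda>w. Re (cinner (x_coeff p) (x w))) borel (\<lambda>w. Re (cinner (snd p) (ez w)))"
    by (rule indep_var_if_indep3_first_second[OF indep_x_ez_ey]) measurable
  then have "distr M borel (\<lambda>w. Re (cinner (x_coeff p) (x w)) + Re (cinner (snd p) (ez w)))
      = gauss_measure 0 (Re (sesq_form (\<sigma>x\<^sup>2 *\<^sub>R mat 1) (x_coeff p) (x_coeff p)) / 2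
          + Re (sesq_form Cez (snd p) (snd p)) / 2)"
    by (intro distr_add_indep_gauss_measure cscg_vecD[OF cscg_x] cscg_vecD[OF cscg_ez]) measurable
  then show ?thesis
    unfolding functional_cov_eq by (simp add: functional_eq[abs_def])
qed

lemma functional_hcov_hermitian: "functional_hcov q p = cnj (functional_hcov p q)"
  unfolding functional_hcov_def
  using cinner_commute[of "x_coeff q" "x_coeff p"]
    sesq_form_hermitian[OF cscg_vecD(2)[OF cscg_ez], of "snd q" "snd p"]
  by simp

sublocale functional: gaussian_moment_family M functional functional_cov
proof
  show "functional (p + q) w = functional p w + functional q w" for p q w
    by (simp add: functional_def cinner_add_left)
  show "functional_cov (p + q) r = functional_cov p r + functional_cov q r" for p q r
    by (simp add: functional_cov_def functional_hcov_def x_coeff_def matrix_vector_right_distrib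
        cinner_add_left sesq_form_add_left algebra_simps add_divide_distrib)
  show "functional_cov p q = functional_cov q p" for p q
    by (simp add: functional_cov_def functional_hcov_hermitian[of p q])
  show "integrable M (\<lambda>w. functional p w ^ 4)"
    "expectation (\<lambda>w. (functional p w)\<^sup>2) = functional_cov p p"
    "expectation (\<lambda>w. functional p w ^ 4) = 3 * (functional_cov p p)\<^sup>2" for p
    using distr_gauss_central_moments[OF borel_measurable_functional distr_functional functional_cov_nonneg]
    by simp_all
qed measurable

text \<open>The coordinates of \<open>(x, z)\<close>, indexed by \<open>'n + 'm\<close>, are complex Gaussian: their real and
  imaginary parts are the functionals for the coordinate directions \<open>e\<close> and \<open>i e\<close>.\<close>

definition coord :: "'n + 'm \<Rightarrow> 'w \<Rightarrow> complex" where
  "coord p w = (case p of Inl i \<Rightarrow> x w $ i | Inr k \<Rightarrow> z w $ k)"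

definition coord_dir :: "'n + 'm \<Rightarrow> (complex ^ 'n) \<times> (complex ^ 'm)" where
  "coord_dir p = (case p of Inl i \<Rightarrow> (axis i 1, 0) | Inr k \<Rightarrow> (0, axis k 1))"

definition coord_cov :: "'n + 'm \<Rightarrow> 'n + 'm \<Rightarrow> complex" where
  "coord_cov p q = functional_hcov (coord_dir p) (coord_dir q)"

abbreviation i_coord_dir :: "'n + 'm \<Rightarrow> (complex ^ 'n) \<times> (complex ^ 'm)" where
  "i_coord_dir p \<equiv> (\<i> *s fst (coord_dir p), \<i> *s snd (coord_dir p))"

lemma x_coeff_smult: "x_coeff (c *s fst p, c *s snd p) = c *s x_coeff p"
  by (simp add: x_coeff_def vector_scalar_commute vector_add_ldistrib)

lemma functional_hcov_smult:
  "functional_hcov (c *s fst p, c *s snd p) q = cnj c * functional_hcov p q"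
  "functional_hcov p (c *s fst q, c *s snd q) = c * functional_hcov p q"
  by (simp_all add: functional_hcov_def x_coeff_smult cinner_smult_left cinner_smult_right
      sesq_form_smult_left sesq_form_smult_right algebra_simps)

lemma coord_eq: "coord p w = Complex (functional (coord_dir p) w) (functional (i_coord_dir p) w)"
  by (cases p) (simp_all add: functional_def coord_dir_def coord_def cinner_axis_left cinner_smult_left
      complex_eq_iff)

lemma coord_cov_hermitian: "coord_cov q p = cnj (coord_cov p q)"
  unfolding coord_cov_def by (rule functional_hcov_hermitian)

lemma
  shows integrable_coord_mult_cnj: "integrable M (\<lambda>w. coord a w * cnj (coord b w))"
    and expectation_coord_mult_cnj: "expectation (\<lambda>w. coord a w * cnj (coord b w)) = coord_cov a b"
    and integrable_coord_mult_cnj4: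
      "integrable M (\<lambda>w. coord a w * cnj (coord b w) * coord c w * cnj (coord d w))"
    and expectation_coord_mult_cnj4:
      "expectation (\<lambda>w. coord a w * cnj (coord b w) * coord c w * cnj (coord d w))
        = coord_cov a b * coord_cov c d + coord_cov a d * coord_cov c b"
proof -
  note isserlis = functional.integrable_u_mult_cnj functional.expectation_u_mult_cnj
    functional.integrable_u_mult_cnj4 functional.expectation_u_mult_cnj4
  note complex_isserlis = isserlis[where \<alpha> = coord_dir and \<beta> = i_coord_dir and K = coord_cov and u = coord,
      OF _ _ _ coord_cov_hermitian coord_eq]
  have "functional_cov (coord_dir p) (coord_dir q) = Re (coord_cov p q) / 2"
    "functional_cov (i_coord_dir p) (i_coord_dir q) = Re (coord_cov p q) / 2"
    "functional_cov (coord_dir p) (i_coord_dir q) = - Im (coord_cov p q) / 2" for p q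
    by (simp_all add: functional_cov_def coord_cov_def functional_hcov_smult)
  then show "integrable M (\<lambda>w. coord a w * cnj (coord b w))"
    "expectation (\<lambda>w. coord a w * cnj (coord b w)) = coord_cov a b"
    "integrable M (\<lambda>w. coord a w * cnj (coord b w) * coord c w * cnj (coord d w))"
    "expectation (\<lambda>w. coord a w * cnj (coord b w) * coord c w * cnj (coord d w))
        = coord_cov a b * coord_cov c d + coord_cov a d * coord_cov c b"
    by (simp_all add: complex_isserlis)
qed

lemma coord_cov_Inl_Inl: "coord_cov (Inl i) (Inl j) = (\<sigma>x\<^sup>2 *\<^sub>R mat 1 :: complex ^ 'n ^ 'n) $ i $ j"
proof -
  have "coord_cov (Inl i) (Inl j) = of_real (\<sigma>x\<^sup>2) * axis j 1 $ i"
    by (simp add: coord_cov_def functional_hcov_def coord_dir_def x_coeff_def cinner_axis_left)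
  moreover have "(\<sigma>x\<^sup>2 *\<^sub>R mat 1 :: complex ^ 'n ^ 'n) $ i $ j = \<sigma>x\<^sup>2 *\<^sub>R (if i = j then 1 else 0)"
    by (simp add: mat_def)
  ultimately show ?thesis
    by (simp add: axis_def scaleR_conv_of_real)
qed

lemma coord_cov_Inl_Inr: "coord_cov (Inl i) (Inr k) = of_real (\<sigma>x\<^sup>2) * cnj (A $ k $ i)"
  by (simp add: coord_cov_def functional_hcov_def coord_dir_def x_coeff_def cinner_axis_left
      cadj_mult_axis_nth)

lemma coord_cov_Inr_Inl: "coord_cov (Inr k) (Inl j) = of_real (\<sigma>x\<^sup>2) * A $ k $ j"
  by (simp add: coord_cov_def functional_hcov_def coord_dir_def x_coeff_def cinner_axis_right
      cadj_mult_axis_nth)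

lemma coord_cov_Inr_Inr: "coord_cov (Inr k) (Inr l) = Cz $ k $ l"
proof -
  have "cinner (cadj A *v axis k 1) (cadj A *v axis l 1) = (A ** cadj A) $ k $ l"
    unfolding cinner_def matrix_matrix_mult_def by (simp add: cadj_mult_axis_nth cadj_nth)
  moreover have "Cz $ k $ l = \<sigma>x\<^sup>2 *\<^sub>R ((A ** cadj A) $ k $ l) + Cez $ k $ l"
    by (simp add: Cz_of_def)
  ultimately show ?thesis
    by (simp add: coord_cov_def functional_hcov_def coord_dir_def x_coeff_def sesq_form_axis
        scaleR_conv_of_real)
qed

lemma distr_inner_ey:
  "distr M borel (\<lambda>w. a \<bullet> ey w) = gauss_measure (a \<bullet> eybar) (a \<bullet> (Cey *v a))"
  and inner_Cey_nonneg: "0 \<le> a \<bullet> (Cey *v a)"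
  using gaussian_ey unfolding real_gaussian_vec_def by blast+

sublocale ey: gaussian_moment_family M "\<lambda>a w. a \<bullet> ey w - a \<bullet> eybar" "\<lambda>a b. a \<bullet> (Cey *v b)"
proof
  show "(a + b) \<bullet> ey w - (a + b) \<bullet> eybar = (a \<bullet> ey w - a \<bullet> eybar) + (b \<bullet> ey w - b \<bullet> eybar)" for a b w
    by (simp add: inner_add_left)
  show "(a + b) \<bullet> (Cey *v c) = a \<bullet> (Cey *v c) + b \<bullet> (Cey *v c)" for a b c
    by (simp add: inner_add_left)
  show "a \<bullet> (Cey *v b) = b \<bullet> (Cey *v a)" for a b
  proof -
    have "a \<bullet> (Cey *v b) = (\<Sum>i\<in>UNIV. \<Sum>j\<in>UNIV. a $ i * Cey $ i $ j * b $ j)"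
      unfolding inner_vec_def matrix_vector_mult_def by (simp add: sum_distrib_left mult.assoc)
    also have "\<dots> = (\<Sum>j\<in>UNIV. \<Sum>i\<in>UNIV. a $ i * Cey $ i $ j * b $ j)"
      by (rule sum.swap)
    also have "\<dots> = b \<bullet> (Cey *v a)"
      unfolding inner_vec_def matrix_vector_mult_def
      by (simp add: sum_distrib_left Cey_sym mult.commute mult.left_commute)
    finally show ?thesis .
  qed
  show "integrable M (\<lambda>w. (a \<bullet> ey w - a \<bullet> eybar) ^ 4)"
    "expectation (\<lambda>w. (a \<bullet> ey w - a \<bullet> eybar)\<^sup>2) = a \<bullet> (Cey *v a)"
    "expectation (\<lambda>w. (a \<bullet> ey w - a \<bullet> eybar) ^ 4) = 3 * (a \<bullet> (Cey *v a))\<^sup>2" for a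
    using distr_gauss_central_moments[OF _ distr_inner_ey inner_Cey_nonneg] by simp_all
qed measurable

definition ey_centered :: "'m \<Rightarrow> 'w \<Rightarrow> real" where
  "ey_centered k w = ey w $ k - eybar $ k"

lemma ey_centered_eq: "ey_centered k w = axis k 1 \<bullet> ey w - axis k 1 \<bullet> eybar"
  by (simp add: ey_centered_def inner_commute[of "axis k 1"] cart_eq_inner_axis)

lemma borel_measurable_ey_centered [measurable]: "ey_centered k \<in> borel_measurable M"
  unfolding ey_centered_def[abs_def] by measurable

lemma integrable_ey_centered: "integrable M (ey_centered k)"
  and expectation_ey_centered: "expectation (ey_centered k) = 0"
  using distr_gauss_central_moments(1)[OF _ distr_inner_ey[of "axis k 1"] inner_Cey_nonneg, where k = 1]
    distr_gauss_central_moments(2)[OF _ distr_inner_ey[of "axis k 1"] inner_Cey_nonneg]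
  unfolding ey_centered_eq[abs_def] by simp_all

lemma integrable_ey_centered_mult: "integrable M (\<lambda>w. ey_centered k w * ey_centered l w)"
  unfolding ey_centered_eq by (rule ey.integrable_L_mult)

lemma expectation_ey_centered_mult: "expectation (\<lambda>w. ey_centered k w * ey_centered l w) = Cey $ k $ l"
proof -
  have "axis k 1 \<bullet> (Cey *v axis l 1) = (Cey *v axis l 1) $ k"
    by (metis inner_commute cart_eq_inner_axis)
  then show ?thesis
    unfolding ey_centered_eq ey.expectation_L_mult by (simp add: matrix_vector_mult_basis column_def)
qed

lemma square_integrable_ey_centered: "square_integrable M (\<lambda>w. complex_of_real (ey_centered k w))"
  by (rule square_integrable_of_real) (simp_all add: power2_eq_square integrable_ey_centered_mult)

lemma coord_eq_case: "coord p w =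
    (case p of Inl i \<Rightarrow> x w $ i | Inr k \<Rightarrow> (A *v x w + ez w) $ k)"
  by (cases p) (simp_all add: coord_def z_def)

lemma indep_coord_mult_cnj_ey_centered:
  shows integrable_coord_mult_cnj_ey_centered:
      "integrable M (\<lambda>w. coord a w * cnj (coord b w) * of_real (ey_centered l w))"
    and expectation_coord_mult_cnj_ey_centered:
      "expectation (\<lambda>w. coord a w * cnj (coord b w) * of_real (ey_centered l w)) = 0"
proof -
  define c where "c p q = (case p of Inl i \<Rightarrow> fst q $ i | Inr k \<Rightarrow> (A *v fst q + snd q) $ k)"
    for p and q :: "(complex ^ 'n) \<times> (complex ^ 'm)"
  define f where "f q = c a q * cnj (c b q)" for q
  define g where "g v = complex_of_real (v $ l - eybar $ l)" for v :: "real ^ 'm"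
  have "continuous_on UNIV (c p)" for p
    unfolding c_def matrix_vector_mult_def
    by (cases p) (auto intro!: continuous_intros)
  then have "c p \<in> borel_measurable borel" for p
    by (rule borel_measurable_continuous_onI)
  then have "f \<in> borel_measurable borel"
    unfolding f_def by measurable
  moreover have "g \<in> borel_measurable borel"
    unfolding g_def by measurable
  ultimately have indep: "indep_var borel (\<lambda>w. f (x w, ez w)) borel (\<lambda>w. g (ey w))"
    by (intro indep_var_if_indep3_pair_third[OF indep_x_ez_ey]) measurable
  have f_eq: "f (x w, ez w) = coord a w * cnj (coord b w)" for w
    by (cases a; cases b) (simp_all add: f_def c_def coord_eq_case)
  have g_eq: "g (ey w) = complex_of_real (ey_centered l w)" for w
    by (simp add: g_def ey_centered_def)
  have integrable_f: "integrable M (\<lambda>w. f (x w, ez w))"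
    unfolding f_eq by (rule integrable_coord_mult_cnj)
  have integrable_g: "integrable M (\<lambda>w. g (ey w))"
    unfolding g_eq using integrable_ey_centered by simp
  show "integrable M (\<lambda>w. coord a w * cnj (coord b w) * of_real (ey_centered l w))"
    using indep_var_integrable[OF indep integrable_f integrable_g] by (simp only: f_eq g_eq)
  show "expectation (\<lambda>w. coord a w * cnj (coord b w) * of_real (ey_centered l w)) = 0"
    using indep_var_lebesgue_integral[OF indep integrable_f integrable_g] expectation_ey_centered
    by (simp add: f_eq g_eq)
qed

definition centered_obs :: "'m \<Rightarrow> 'w \<Rightarrow> real" where
  "centered_obs k w = (cmod ((A *v x w) $ k + ez w $ k))\<^sup>2 + ey w $ k - ybar_of Cz eybar $ k"

definition intensity :: "'m \<Rightarrow> 'w \<Rightarrow> complex" where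
  "intensity k w = coord (Inr k) w * cnj (coord (Inr k) w)"

lemma of_real_centered_obs:
  "complex_of_real (centered_obs k w) = (intensity k w - Cz $ k $ k) + of_real (ey_centered k w)"
proof -
  have "Cz $ k $ k = cnj (Cz $ k $ k)"
    using coord_cov_hermitian[of "Inr k" "Inr k"] by (simp add: coord_cov_Inr_Inr)
  then have "complex_of_real (Re (Cz $ k $ k)) = Cz $ k $ k"
    by (simp add: complex_eq_iff)
  moreover have "coord (Inr k) w = (A *v x w) $ k + ez w $ k"
    by (simp add: coord_def z_def)
  then have "complex_of_real ((cmod ((A *v x w) $ k + ez w $ k))\<^sup>2) = intensity k w"
    unfolding intensity_def by (simp only: complex_norm_square)
  ultimately show ?thesis
    by (simp add: centered_obs_def ybar_of_def ey_centered_def)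
qed

lemma borel_measurable_centered_obs [measurable]: "centered_obs k \<in> borel_measurable M"
  unfolding centered_obs_def[abs_def] by (measurable, rule borel_measurable_matrix_vector_mult) measurable

lemma square_integrable_coord_mult_cnj: "square_integrable M (\<lambda>w. coord a w * cnj (coord b w))"
proof (rule square_integrableI_mult_cnj)
  show "(\<lambda>w. coord a w * cnj (coord b w)) \<in> borel_measurable M"
    using integrable_coord_mult_cnj by (rule borel_measurable_integrable)
  have "(\<lambda>w. coord a w * cnj (coord b w) * cnj (coord a w * cnj (coord b w)))
      = (\<lambda>w. coord a w * cnj (coord b w) * coord b w * cnj (coord a w))"
    by (simp add: fun_eq_iff mult_ac)
  then show "integrable M (\<lambda>w. coord a w * cnj (coord b w) * cnj (coord a w * cnj (coord b w)))"
    using integrable_coord_mult_cnj4[of a b b a] by simp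
qed

lemma square_integrable_centered_obs: "square_integrable M (\<lambda>w. complex_of_real (centered_obs k w))"
  unfolding of_real_centered_obs intensity_def
  by (intro square_integrable_add square_integrable_diff square_integrable_coord_mult_cnj
      square_integrable_ey_centered square_integrable_const)

lemma expectation_intensity: "expectation (intensity k) = Cz $ k $ k"
  unfolding intensity_def[abs_def] expectation_coord_mult_cnj coord_cov_Inr_Inr ..

lemma integrable_intensity: "integrable M (intensity k)"
  unfolding intensity_def[abs_def] by (rule integrable_coord_mult_cnj)

lemma expectation_of_real_centered_obs: "expectation (\<lambda>w. complex_of_real (centered_obs k w)) = 0"
  unfolding of_real_centered_obs
  using integrable_intensity integrable_ey_centered expectation_intensity expectation_ey_centered
  by (simp add: prob_space)

lemma integrable_of_real_ey_centered_mult: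
  "integrable M (\<lambda>w. complex_of_real (ey_centered k w) * of_real (ey_centered l w))"
  and expectation_of_real_ey_centered_mult:
  "expectation (\<lambda>w. complex_of_real (ey_centered k w) * of_real (ey_centered l w)) = of_real (Cey $ k $ l)"
  using integrable_of_real[OF integrable_ey_centered_mult[of k l]] expectation_ey_centered_mult[of k l]
    integral_complex_of_real[of M "\<lambda>w. ey_centered k w * ey_centered l w"]
  by simp_all

lemma expectation_of_real_centered_obs_mult:
  "expectation (\<lambda>w. complex_of_real (centered_obs k w) * of_real (centered_obs l w)) = of_real (T_of Cz Cey $ k $ l)"
proof -
  let ?e = "\<lambda>k w. complex_of_real (ey_centered k w)"
  have "(\<lambda>w. complex_of_real (centered_obs k w) * of_real (centered_obs l w)) = (\<lambda>w.
      intensity k w * intensity l w - Cz $ k $ k * intensity l w - Cz $ l $ l * intensity k w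
      + Cz $ k $ k * Cz $ l $ l + intensity k w * ?e l w - Cz $ k $ k * ?e l w
      + intensity l w * ?e k w - Cz $ l $ l * ?e k w + ?e k w * ?e l w)"
    by (simp add: fun_eq_iff of_real_centered_obs algebra_simps)
  moreover have "integrable M (\<lambda>w. intensity k w * intensity l w)"
    "expectation (\<lambda>w. intensity k w * intensity l w) = Cz $ k $ k * Cz $ l $ l + Cz $ k $ l * Cz $ l $ k"
    using integrable_coord_mult_cnj4[of "Inr k" "Inr k" "Inr l" "Inr l"]
      expectation_coord_mult_cnj4[of "Inr k" "Inr k" "Inr l" "Inr l"]
    by (simp_all add: intensity_def coord_cov_Inr_Inr mult.assoc)
  moreover have "integrable M (\<lambda>w. intensity k w * ?e l w)" "expectation (\<lambda>w. intensity k w * ?e l w) = 0"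
    for k l
    using integrable_coord_mult_cnj_ey_centered expectation_coord_mult_cnj_ey_centered
    by (simp_all add: intensity_def)
  ultimately have "expectation (\<lambda>w. complex_of_real (centered_obs k w) * of_real (centered_obs l w))
      = Cz $ k $ l * Cz $ l $ k + of_real (Cey $ k $ l)"
    using integrable_intensity integrable_ey_centered expectation_intensity expectation_ey_centered
      integrable_of_real_ey_centered_mult expectation_of_real_ey_centered_mult
    by (simp add: prob_space algebra_simps)
  also have "\<dots> = of_real (T_of Cz Cey $ k $ l)"
    using coord_cov_hermitian[of "Inr k" "Inr l"] unfolding coord_cov_Inr_Inr
    by (simp add: T_of_def complex_norm_square[symmetric] mult.commute)
  finally show ?thesis .
qed

lemma linear_mmse_centered_obs:
  assumes "invertible (T_of Cz Cey)"
  shows "linear_mmse M centered_obs (T_of Cz Cey)"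
proof
  show "integrable M (\<lambda>w. (centered_obs l w)\<^sup>2)" for l
    using square_integrable_integrable_norm_square[OF square_integrable_centered_obs] by simp
  show "expectation (centered_obs l) = 0" for l
    using expectation_of_real_centered_obs[of l] by (simp add: integral_complex_of_real)
  show "expectation (\<lambda>w. centered_obs k w * centered_obs l w) = T_of Cz Cey $ k $ l" for k l
    using expectation_of_real_centered_obs_mult[of k l] integral_complex_of_real[of M "\<lambda>w. centered_obs k w * centered_obs l w"]
    by simp
qed (simp_all add: assms)

lemma couter_nth: "couter (x w) (x w) $ i $ j = coord (Inl i) w * cnj (coord (Inl j) w)"
  by (simp add: couter_def coord_def)

lemma square_integrable_couter_nth: "square_integrable M (\<lambda>w. couter (x w) (x w) $ i $ j)"
  unfolding couter_nth by (rule square_integrable_coord_mult_cnj)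

lemma expectation_couter_nth:
  "expectation (\<lambda>w. couter (x w) (x w) $ i $ j) = (\<sigma>x\<^sup>2 *\<^sub>R mat 1 :: complex ^ 'n ^ 'n) $ i $ j"
  unfolding couter_nth expectation_coord_mult_cnj coord_cov_Inl_Inl ..

lemma expectation_centered_obs_mult_couter_nth:
  "expectation (\<lambda>w. of_real (centered_obs k w) * couter (x w) (x w) $ i $ j) = V_of \<sigma>x A k $ i $ j"
proof -
  let ?X = "\<lambda>w. coord (Inl i) w * cnj (coord (Inl j) w)"
  have pointwise: "of_real (centered_obs k w) * ?X w
      = (intensity k w * ?X w - Cz $ k $ k * ?X w) + ?X w * of_real (ey_centered k w)" for w
    by (simp add: of_real_centered_obs algebra_simps)
  have integrable_intensity_X: "integrable M (\<lambda>w. intensity k w * ?X w)"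
    using integrable_coord_mult_cnj4[of "Inr k" "Inr k" "Inl i" "Inl j"] by (simp add: intensity_def mult.assoc)
  have "expectation (\<lambda>w. intensity k w * ?X w) = Cz $ k $ k * coord_cov (Inl i) (Inl j)
       + coord_cov (Inr k) (Inl j) * coord_cov (Inl i) (Inr k)"
    using expectation_coord_mult_cnj4[of "Inr k" "Inr k" "Inl i" "Inl j"]
    by (simp add: intensity_def coord_cov_Inr_Inr mult.assoc)
  then have "expectation (\<lambda>w. of_real (centered_obs k w) * ?X w)
      = coord_cov (Inr k) (Inl j) * coord_cov (Inl i) (Inr k)"
    unfolding pointwise
    using integrable_intensity_X integrable_coord_mult_cnj expectation_coord_mult_cnj
      integrable_coord_mult_cnj_ey_centered expectation_coord_mult_cnj_ey_centered
    by (simp del: of_real_mult)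
  also have "\<dots> = (\<sigma>x ^ 4) *\<^sub>R (cnj (A $ k $ i) * A $ k $ j)"
    by (simp add: coord_cov_Inr_Inl coord_cov_Inl_Inr scaleR_conv_of_real power2_eq_square power4_eq_xxxx)
  also have "\<dots> = V_of \<sigma>x A k $ i $ j"
    by (simp add: V_of_def couter_def arow_def)
  finally show ?thesis
    unfolding couter_nth .
qed

end

theorem mainTheorem5:
  fixes M :: "'w measure"
    and A :: "complex^'n^'m"
    and \<sigma>x :: real
    and x :: "'w \<Rightarrow> complex^'n"
    and ez :: "'w \<Rightarrow> complex^'m"
    and ey :: "'w \<Rightarrow> real^'m"
    and Cez :: "complex^'m^'m"
    and eybar :: "real^'m"
    and Cey :: "real^'m^'m"
    and y :: "'w \<Rightarrow> real^'m"
  assumes "prob_space M"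
    and "cscg_vec M x (\<sigma>x\<^sup>2 *\<^sub>R mat 1 :: complex^'n^'n)"
    and "cscg_vec M ez Cez"
    and "real_gaussian_vec M ey eybar Cey"
    and "indep3 M x ez ey"
    and y_def: "y = (\<lambda>\<omega>. (\<chi> m. (cmod ((A *v x \<omega>) $ m + ez \<omega> $ m))\<^sup>2 + ey \<omega> $ m))"
    and "invertible (T_of (Cz_of \<sigma>x A Cez) Cey)"
  defines "D \<equiv> (\<lambda>\<omega>. \<sigma>x\<^sup>2 *\<^sub>R (mat 1 :: complex^'n^'n) + (\<Sum>m\<in>UNIV. (matrix_inv (T_of (Cz_of \<sigma>x A Cez) Cey) *v (y \<omega> - ybar_of (Cz_of \<sigma>x A Cez) eybar)) $ m *\<^sub>R V_of \<sigma>x A m))"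
  shows "(\<exists>W0 W. \<forall>\<omega>. D \<omega> = W0 + (\<Sum>m\<in>UNIV. y \<omega> $ m *\<^sub>R W m))
    \<and> (\<forall>(W0::complex^'n^'n) (W::'m \<Rightarrow> complex^'n^'n).
          (\<integral>\<omega>. (frob_norm (D \<omega> - couter (x \<omega>) (x \<omega>)))\<^sup>2 \<partial>M)
          \<le> (\<integral>\<omega>. (frob_norm (W0 + (\<Sum>m\<in>UNIV. y \<omega> $ m *\<^sub>R W m) - couter (x \<omega>) (x \<omega>)))\<^sup>2 \<partial>M))
    \<and> (\<forall>(W0::complex^'n^'n) (W::'m \<Rightarrow> complex^'n^'n).
          (\<integral>\<omega>. (frob_norm (W0 + (\<Sum>m\<in>UNIV. y \<omega> $ m *\<^sub>R W m) - couter (x \<omega>) (x \<omega>)))\<^sup>2 \<partial>M)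
            = (\<integral>\<omega>. (frob_norm (D \<omega> - couter (x \<omega>) (x \<omega>)))\<^sup>2 \<partial>M)
          \<longrightarrow> (AE \<omega> in M. W0 + (\<Sum>m\<in>UNIV. y \<omega> $ m *\<^sub>R W m) = D \<omega>))
    \<and> complex_of_real (\<integral>\<omega>. (frob_norm (D \<omega> - couter (x \<omega>) (x \<omega>)))\<^sup>2 \<partial>M)
        = complex_of_real (\<integral>\<omega>. (frob_norm (couter (x \<omega>) (x \<omega>) - \<sigma>x\<^sup>2 *\<^sub>R mat 1))\<^sup>2 \<partial>M)
          - (\<Sum>m\<in>UNIV. \<Sum>m'\<in>UNIV. complex_of_real (matrix_inv (T_of (Cz_of \<sigma>x A Cez) Cey) $ m $ m') * trace (cadj (V_of \<sigma>x A m) ** V_of \<sigma>x A m'))"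
proof -
  interpret phaseless_model M A \<sigma>x x ez ey Cez eybar Cey
    using assms(1-5) unfolding phaseless_model_def phaseless_model_axioms_def by blast
  interpret linear_mmse M centered_obs "T_of Cz Cey"
    using assms(7) by (rule linear_mmse_centered_obs)
  have y_nth: "y w $ m = centered_obs m w + ybar_of Cz eybar $ m" for w m
    by (simp add: y_def centered_obs_def)
  have "(\<chi> l. centered_obs l w) = y w - ybar_of Cz eybar" for w
    by (simp add: vec_eq_iff y_nth)
  then have D_eq: "D = lmmse_matrix (\<sigma>x\<^sup>2 *\<^sub>R mat 1) (V_of \<sigma>x A)"
    by (simp add: D_def lmmse_matrix_def fun_eq_iff)
  note target = square_integrable_couter_nth expectation_couter_nth expectation_centered_obs_mult_couter_nth
  have affine: "affine_in_Y (\<lambda>w. (W0 + (\<Sum>m\<in>UNIV. y w $ m *\<^sub>R W m)) $ i $ j)" for W0 W i j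
    using affine_in_Y_matrix_entry[of W0 "\<lambda>m. ybar_of Cz eybar $ m" W] by (simp add: y_nth)
  have "\<exists>W0 W. \<forall>\<omega>. D \<omega> = W0 + (\<Sum>m\<in>UNIV. y \<omega> $ m *\<^sub>R W m)"
    unfolding D_def by (rule affine_form_sum_matrix_vector_mult)
  then show ?thesis
    using lmmse_matrix_optimal[OF target affine] lmmse_matrix_unique[OF target affine]
      lmmse_matrix_mse[OF target]
    unfolding D_eq by blast
qed

end
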